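(* Fix a dimension $D\geqslant 2$. There exist constants $c_1,c_2>0$ (depending only on $D$) such that for every integer $r\geqslant 2$, letting $\mathcal{G}=\{0,1,\dots,r-1\}^D$ be the $r\times r\times\cdots\times r$ grid of $n=r^D$ points, and for every integer $k$ with $0\leqslant k<n$, $$c_1\,\frac{r}{(k+1)^{1/D}}\leqslant \Delta(\mathcal{G},k)\leqslant c_2\,\frac{r}{(k+1)^{1/D}},$$ i.e. $\Delta(\mathcal{G},k)=\Theta\big(r/(k+1)^{1/D}\big)$.
   Context: For a graph $G$ whose vertices are points in $\mathbb{R}^D$, each edge $(u,v)$ has weight equal to the Euclidean distance $d(u,v)$ (edges may cross or overlap), and $d_G(u,v)$ is the length of a shortest path in $G$ between $u$ and $v$. The dilation of $G$ is $\Delta(G)=\max_{u\neq v\in V(G)} d_G(u,v)/d(u,v)$. For a finite set $S$ of $n$ points and an integer $k\ge0$, $\Delta(S,k)$ is the minimum of $\Delta(G)$ over all graphs $G$ with vertex set exactly $S$ and exactly $n-1+k$ edges. *)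

theory Defs
  imports "HOL-Analysis.Analysis" "HOL-Library.Extended_Real"
begin

text \<open>A (simple, undirected) geometric graph on a point set S is given by its edge set:
  a set of two-element subsets of S. Edge weights are Euclidean distances.\<close>

definition graph_edges_on :: "'a set \<Rightarrow> 'a set set" where
  "graph_edges_on S = {{u, v} | u v. u \<in> S \<and> v \<in> S \<and> u \<noteq> v}"

definition is_walk :: "'a set set \<Rightarrow> 'a \<Rightarrow> 'a \<Rightarrow> 'a list \<Rightarrow> bool" where
  "is_walk E u v p \<longleftrightarrow> p \<noteq> [] \<and> hd p = u \<and> last p = v \<and>
     (\<forall>i. Suc i < length p \<longrightarrow> {p ! i, p ! Suc i} \<in> E)"

definition walk_length :: "'a::metric_space list \<Rightarrow> real" where
  "walk_length p = (\<Sum>i<length p - 1. dist (p ! i) (p ! Suc i))"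

text \<open>Shortest-path distance d_G(u,v) (infinite if u and v are not connected).\<close>
definition graph_dist :: "'a::metric_space set set \<Rightarrow> 'a \<Rightarrow> 'a \<Rightarrow> ereal" where
  "graph_dist E u v = (INF p \<in> {p. is_walk E u v p}. ereal (walk_length p))"

definition dilation :: "'a::metric_space set \<Rightarrow> 'a set set \<Rightarrow> ereal" where
  "dilation S E = (SUP (u, v) \<in> {(u, v). u \<in> S \<and> v \<in> S \<and> u \<noteq> v}.
                      graph_dist E u v / ereal (dist u v))"

definition min_dilation :: "'a::metric_space set \<Rightarrow> nat \<Rightarrow> ereal" where
  "min_dilation S k = (INF E \<in> {E. E \<subseteq> graph_edges_on S \<and> card E = card S - 1 + k}.
                          dilation S E)"

definition grid :: "nat \<Rightarrow> (real ^ 'n) set" where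
  "grid r = {x. \<forall>i. x $ i \<in> real ` {0..<r}}"

end

(*
  If the dilation is below T, cut the grid into (r div L)^D disjoint cubes of side
  L = 4 ceil(T) + 2. Inside each cube lies a square lattice loop of side 2 ceil(T) + 1, at distance
  ceil(T) from the boundary; replacing its unit steps by graph walks shorter than T gives a closed
  chain of walks that stays in the cube and crosses a ray from the centre of the loop an odd number
  of times. Since a closed walk traverses every bridge an even number of times, some edge inside the
  cube is not a bridge of the subgraph inside the cube. Removing one such edge per cube keeps the
  grid connected, so the k extra edges number at least (r div L)^D, whence T >= r / (20 (k + 1)^(1/D)).

  Call the grid points with all coordinates divisible by L hubs, join every hub to
  the hubs at distance L along the axes, and join every other point to a neighbour one step
  closer to the hub below it. With L about D r / (k + 1)^(1/D) this uses at most n - 1 + k edges,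
  and any two points at distance d are joined by a path of length at most 4 D L d.
*)
theory Submission
  imports Defs
begin

section \<open>Walks and connectivity\<close>

definition adj :: "'a set set \<Rightarrow> 'a \<Rightarrow> 'a \<Rightarrow> bool" where
  "adj E u v \<longleftrightarrow> {u, v} \<in> E"

lemma adj_sym: "adj E u v = adj E v u"
  unfolding adj_def by (simp add: insert_commute)

lemma adj_mono: "E \<subseteq> E' \<Longrightarrow> adj E u v \<Longrightarrow> adj E' u v"
  unfolding adj_def by blast

lemma rtranclp_adj_sym: "(adj E)\<^sup>*\<^sup>* u v \<Longrightarrow> (adj E)\<^sup>*\<^sup>* v u"
proof (induction rule: rtranclp_induct)
  case (step y z)
  then show ?case by (metis adj_sym converse_rtranclp_into_rtranclp)
qed simp

lemma rtranclp_adj_mono: "E \<subseteq> E' \<Longrightarrow> (adj E)\<^sup>*\<^sup>* u v \<Longrightarrow> (adj E')\<^sup>*\<^sup>* u v"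
  by (metis adj_mono mono_rtranclp)

lemma walk_length_single [simp]: "walk_length [x] = 0"
  by (simp add: walk_length_def)

lemma walk_length_Cons2 [simp]:
  "walk_length (x # y # xs) = dist x y + walk_length (y # xs)"
  unfolding walk_length_def by (simp add: sum.lessThan_Suc_shift del: sum.lessThan_Suc)

lemma walk_length_nonneg: "walk_length p \<ge> 0"
  unfolding walk_length_def by (simp add: sum_nonneg)

lemma is_walk_Nil [simp]: "\<not> is_walk E u v []"
  by (simp add: is_walk_def)

lemma is_walk_single [simp]: "is_walk E u v [x] \<longleftrightarrow> x = u \<and> x = v"
  by (auto simp: is_walk_def)

lemma is_walk_Cons2 [simp]:
  "is_walk E u v (x # y # xs) \<longleftrightarrow> x = u \<and> {x, y} \<in> E \<and> is_walk E y v (y # xs)"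
  unfolding is_walk_def by (auto simp: less_Suc_eq_0_disj)

lemma is_walk_hd: "is_walk E u v p \<Longrightarrow> p = u # tl p"
  unfolding is_walk_def by auto

lemma is_walk_mono: "is_walk E u v p \<Longrightarrow> E \<subseteq> E' \<Longrightarrow> is_walk E' u v p"
  unfolding is_walk_def by blast

lemma is_walk_restrict: "is_walk E u v p \<Longrightarrow> set p \<subseteq> K \<Longrightarrow> is_walk {e \<in> E. e \<subseteq> K} u v p"
  unfolding is_walk_def by (auto simp: nth_mem)

lemma is_walk_imp_rtranclp: "is_walk E u v p \<Longrightarrow> (adj E)\<^sup>*\<^sup>* u v"
proof (induction p arbitrary: u rule: induct_list012)
  case (3 x y xs)
  then show ?case by (auto simp: adj_def intro: converse_rtranclp_into_rtranclp)
qed auto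

lemma dist_le_walk_length: "is_walk E u v p \<Longrightarrow> x \<in> set p \<Longrightarrow> dist u x \<le> walk_length p"
proof (induction p arbitrary: u rule: induct_list012)
  case (3 z y ys)
  show ?case
  proof (cases "x = z")
    case True
    then show ?thesis using "3.prems" walk_length_nonneg[of "z # y # ys"] by simp
  next
    case False
    then have "dist y x \<le> walk_length (y # ys)" using "3.prems" "3.IH"(2)[of y] by simp
    then show ?thesis using "3.prems" dist_triangle[of u x y] by simp
  qed
qed auto

lemma dist_le_walk_length_ends: "is_walk E u v p \<Longrightarrow> dist u v \<le> walk_length p"
  using dist_le_walk_length[of E u v p v] by (metis is_walk_def last_in_set)

lemma walk_append:
  "is_walk E u v p \<Longrightarrow> is_walk E v w q \<Longrightarrow>
   is_walk E u w (p @ tl q) \<and> walk_length (p @ tl q) = walk_length p + walk_length q"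
proof (induction p arbitrary: u rule: induct_list012)
  case (2 x)
  then show ?case using is_walk_hd[OF "2.prems"(2)] by (cases q) auto
next
  case (3 x y xs)
  then have "x = u" "{u, y} \<in> E" "is_walk E y v (y # xs)" by auto
  with "3.IH"(2)[of y] "3.prems"(2) show ?case by simp
qed auto

lemma walk_rev: "is_walk E u v p \<Longrightarrow> is_walk E v u (rev p) \<and> walk_length (rev p) = walk_length p"
proof (induction p arbitrary: u rule: induct_list012)
  case (3 x y xs)
  have IH: "is_walk E v y (rev (y # xs)) \<and> walk_length (rev (y # xs)) = walk_length (y # xs)"
    using "3.IH"(2)[of y] "3.prems" by (simp del: rev.simps)
  have "is_walk E y u [y, u]" using "3.prems" by (clarsimp simp: insert_commute)
  from walk_append[OF conjunct1[OF IH] this] IH "3.prems" show ?case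
    by (simp add: dist_commute del: rev.simps) simp
qed auto

definition walk_le :: "'a::metric_space set set \<Rightarrow> 'a \<Rightarrow> 'a \<Rightarrow> real \<Rightarrow> bool" where
  "walk_le E u v a \<longleftrightarrow> (\<exists>p. is_walk E u v p \<and> walk_length p \<le> a)"

lemma walk_le_refl: "a \<ge> 0 \<Longrightarrow> walk_le E u u a"
  unfolding walk_le_def by (rule exI[of _ "[u]"]) simp

lemma walk_le_edge: "{u, v} \<in> E \<Longrightarrow> dist u v \<le> a \<Longrightarrow> walk_le E u v a"
  unfolding walk_le_def by (rule exI[of _ "[u, v]"]) simp

lemma walk_le_trans:
  assumes "walk_le E u v a" "walk_le E v w b"
  shows "walk_le E u w (a + b)"
proof -
  obtain p q where p: "is_walk E u v p" "walk_length p \<le> a"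
    and q: "is_walk E v w q" "walk_length q \<le> b"
    using assms unfolding walk_le_def by blast
  show ?thesis
    unfolding walk_le_def using walk_append[OF p(1) q(1)] p(2) q(2) by (intro exI[of _ "p @ tl q"]) auto
qed

lemma walk_le_mono: "walk_le E u v a \<Longrightarrow> a \<le> b \<Longrightarrow> walk_le E u v b"
  unfolding walk_le_def by force

lemma walk_le_sym: "walk_le E u v a \<Longrightarrow> walk_le E v u a"
  unfolding walk_le_def using walk_rev by metis

lemma graph_dist_le_if_walk_le: "walk_le E u v a \<Longrightarrow> graph_dist E u v \<le> ereal a"
  unfolding walk_le_def graph_dist_def by (auto intro: INF_lower2)

lemma graph_dist_less_imp_walk: "graph_dist E u v < ereal T \<Longrightarrow> \<exists>p. is_walk E u v p \<and> walk_length p < T"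
  unfolding graph_dist_def by (auto simp: INF_less_iff)

lemma graph_dist_antimono: "E \<subseteq> E' \<Longrightarrow> graph_dist E' u v \<le> graph_dist E u v"
  unfolding graph_dist_def by (rule INF_superset_mono) (auto intro: is_walk_mono)

lemma dilation_antimono: "E0 \<subseteq> E \<Longrightarrow> dilation S E \<le> dilation S E0"
  unfolding dilation_def
  by (rule SUP_mono) (force intro: ereal_divide_right_mono graph_dist_antimono)

lemma walk_shorter_if_dilation_less:
  assumes "dilation S E < ereal T" "u \<in> S" "v \<in> S" "u \<noteq> v"
  shows "\<exists>p. is_walk E u v p \<and> walk_length p < T * dist u v"
proof -
  have "graph_dist E u v / ereal (dist u v) \<le> dilation S E"
    unfolding dilation_def using assms(2-4) by (intro SUP_upper2[of "(u, v)"]) auto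
  then have "graph_dist E u v / ereal (dist u v) < ereal T"
    using assms(1) by (rule le_less_trans)
  with \<open>u \<noteq> v\<close> have "graph_dist E u v < ereal T * ereal (dist u v)"
    by (subst (asm) ereal_divide_less_iff) auto
  then have "graph_dist E u v < ereal (T * dist u v)" by simp
  then show ?thesis by (rule graph_dist_less_imp_walk)
qed

lemma unit_walk_shorter_if_dilation_less:
  assumes "dilation S E < ereal T" "u \<in> S" "v \<in> S" "dist u v = 1"
  shows "\<exists>p. is_walk E u v p \<and> walk_length p < T"
  using walk_shorter_if_dilation_less[OF assms(1-3)] assms(4) by fastforce

lemma connected_if_dilation_less:
  assumes "dilation S E < ereal T" "u \<in> S" "v \<in> S"
  shows "(adj E)\<^sup>*\<^sup>* u v"
  using walk_shorter_if_dilation_less[OF assms] is_walk_imp_rtranclp by (cases "u = v") auto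

text \<open>Every vertex other than the root is charged to the first edge of a shortest path to the root.\<close>

lemma card_le_card_edges_if_connected:
  assumes "finite E" and "r0 \<in> S" and conn: "\<forall>v\<in>S. (adj E)\<^sup>*\<^sup>* v r0"
  shows "card S \<le> card E + 1"
proof -
  define d where "d v = (LEAST l. (adj E ^^ l) v r0)" for v
  have d: "(adj E ^^ d v) v r0" if "v \<in> S" for v
    unfolding d_def using conn that by (metis LeastI rtranclp_imp_relpowp)
  have "\<exists>w. adj E v w \<and> d w < d v" if v: "v \<in> S" "v \<noteq> r0" for v
  proof -
    obtain l where l: "d v = Suc l"
      using d[OF v(1)] v(2) by (cases "d v") auto
    then obtain w where w: "adj E v w" "(adj E ^^ l) w r0"
      using d[OF v(1)] by (metis relpowp_Suc_D2)
    have "d w \<le> l" unfolding d_def using w(2) by (rule Least_le)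
    with w l show ?thesis by auto
  qed
  then obtain next_v where next_v: "\<And>v. v \<in> S \<Longrightarrow> v \<noteq> r0 \<Longrightarrow> adj E v (next_v v) \<and> d (next_v v) < d v"
    by metis
  have "inj_on (\<lambda>v. {v, next_v v}) (S - {r0})"
  proof (rule inj_onI)
    fix u v assume u: "u \<in> S - {r0}" and v: "v \<in> S - {r0}" and eq: "{u, next_v u} = {v, next_v v}"
    show "u = v"
    proof (rule ccontr)
      assume "u \<noteq> v"
      with eq have "u = next_v v" "v = next_v u" by (auto simp: doubleton_eq_iff)
      then show False using next_v[of u] next_v[of v] u v by auto
    qed
  qed
  moreover have "(\<lambda>v. {v, next_v v}) ` (S - {r0}) \<subseteq> E"
    using next_v by (auto simp: adj_def)
  ultimately have "card (S - {r0}) \<le> card E"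
    using card_inj_on_le \<open>finite E\<close> by blast
  then show ?thesis
    using \<open>r0 \<in> S\<close> by (cases "finite S") (auto simp: card_Diff_singleton)
qed

lemma rtranclp_adj_Diff:
  assumes "\<forall>e\<in>F. \<exists>a b. e = {a, b} \<and> (adj (E - F))\<^sup>*\<^sup>* a b"
    and "(adj E)\<^sup>*\<^sup>* u v"
  shows "(adj (E - F))\<^sup>*\<^sup>* u v"
  using assms(2)
proof (induction rule: rtranclp_induct)
  case (step y z)
  have "(adj (E - F))\<^sup>*\<^sup>* y z"
  proof (cases "{y, z} \<in> F")
    case True
    then obtain a b where "{y, z} = {a, b}" "(adj (E - F))\<^sup>*\<^sup>* a b"
      using assms(1) by metis
    then show ?thesis by (metis doubleton_eq_iff rtranclp_adj_sym)
  next
    case False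
    then have "adj (E - F) y z" using step.hyps(2) by (simp add: adj_def)
    then show ?thesis by simp
  qed
  with step.IH show ?case by (rule rtranclp_trans)
qed simp

lemma card_le_card_edges_Diff:
  assumes "finite E" and "F \<subseteq> E" and "r0 \<in> S" and "\<forall>v\<in>S. (adj E)\<^sup>*\<^sup>* v r0"
    and "\<forall>e\<in>F. \<exists>a b. e = {a, b} \<and> (adj (E - F))\<^sup>*\<^sup>* a b"
  shows "card S + card F \<le> card E + 1"
proof -
  have "card S \<le> card (E - F) + 1"
    using assms by (intro card_le_card_edges_if_connected) (auto intro: rtranclp_adj_Diff)
  moreover have "card (E - F) + card F = card E"
    using assms(1,2) by (metis card_Diff_subset card_mono finite_subset le_add_diff_inverse2)
  ultimately show ?thesis by linarith
qed

section \<open>Bridges and parity\<close>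

fun crossings :: "('a \<Rightarrow> 'a \<Rightarrow> bool) \<Rightarrow> 'a list \<Rightarrow> nat" where
  "crossings C (x # y # xs) = of_bool (C x y) + crossings C (y # xs)"
| "crossings C _ = 0"

lemma crossings_eq_0: "(\<forall>u\<in>set p. \<forall>v\<in>set p. \<not> C u v) \<Longrightarrow> crossings C p = 0"
  by (induction C p rule: crossings.induct) auto

lemma bridge_separates:
  assumes "\<not> (adj (H - {{a, b}}))\<^sup>*\<^sup>* a b" and "{u, v} \<in> H"
  shows "(adj (H - {{a, b}}))\<^sup>*\<^sup>* a u \<noteq> (adj (H - {{a, b}}))\<^sup>*\<^sup>* a v \<longleftrightarrow> {u, v} = {a, b}"
proof (cases "{u, v} = {a, b}")
  case True
  with assms(1) show ?thesis by (auto simp: doubleton_eq_iff)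
next
  case False
  with assms(2) have "adj (H - {{a, b}}) u v" "adj (H - {{a, b}}) v u"
    by (auto simp: adj_def insert_commute)
  with False show ?thesis by (meson rtranclp.rtrancl_into_rtrancl)
qed

text \<open>If every \<open>C\<close>-edge is a bridge, then \<open>\<phi> w\<close>, the number of \<open>C\<close>-bridges having \<open>w\<close> on a
  designated side, changes parity exactly along the \<open>C\<close>-edges.\<close>

lemma bridge_parity_potential:
  assumes "finite H" and "symp C"
    and bridges: "\<forall>a b. {a, b} \<in> H \<longrightarrow> C a b \<longrightarrow> \<not> (adj (H - {{a, b}}))\<^sup>*\<^sup>* a b"
  shows "\<exists>\<phi> :: 'a \<Rightarrow> nat. \<forall>u v. {u, v} \<in> H \<longrightarrow> even (of_bool (C u v) + \<phi> u + \<phi> v)"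
proof -
  define B where "B = {e \<in> H. \<exists>a b. e = {a, b} \<and> C a b}"
  define root where "root e = (SOME a. \<exists>b. e = {a, b} \<and> C a b)" for e :: "'a set"
  define side where "side e w \<longleftrightarrow> (adj (H - {e}))\<^sup>*\<^sup>* (root e) w" for e w
  define \<phi> where "\<phi> w = (\<Sum>e\<in>B. of_bool (side e w) :: nat)" for w
  have "even (of_bool (C u v) + \<phi> u + \<phi> v)" if uv: "{u, v} \<in> H" for u v
  proof -
    have flip: "side e u \<noteq> side e v \<longleftrightarrow> e = {u, v}" if "e \<in> B" for e
    proof -
      obtain b where "e = {root e, b}" "C (root e) b"
        using \<open>e \<in> B\<close> someI_ex[of "\<lambda>a. \<exists>b. e = {a, b} \<and> C a b"] unfolding B_def root_def by blast
      with that bridge_separates[OF _ uv] bridges show ?thesis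
        unfolding side_def B_def by (metis (mono_tags, lifting) mem_Collect_eq)
    qed
    have "{u, v} \<in> B \<longleftrightarrow> C u v"
      using uv \<open>symp C\<close> unfolding B_def by (auto simp: doubleton_eq_iff dest: sympD)
    then have "(\<Sum>e\<in>B. of_bool (e = {u, v}) :: nat) = of_bool (C u v)"
      using \<open>finite H\<close> unfolding B_def of_bool_def by (simp add: sum.delta)
    then have "of_bool (C u v) + \<phi> u + \<phi> v =
        (\<Sum>e\<in>B. of_bool (e = {u, v}) + of_bool (side e u) + of_bool (side e v))"
      unfolding \<phi>_def by (simp add: sum.distrib)
    also have "even \<dots>"
      using flip by (intro dvd_sum) auto
    finally show ?thesis .
  qed
  then show ?thesis by blast
qed

lemma walk_crossings_parity:
  assumes \<phi>: "\<forall>u v. {u, v} \<in> H \<longrightarrow> even (of_bool (C u v) + \<phi> u + \<phi> v)"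
  shows "is_walk H u v p \<Longrightarrow> even (crossings C p + \<phi> u + \<phi> v)"
proof (induction p arbitrary: u rule: induct_list012)
  case (3 x y xs)
  then have "x = u" "{u, y} \<in> H" "is_walk H y v (y # xs)" by auto
  then have "even (crossings C (y # xs) + \<phi> y + \<phi> v)" "even (of_bool (C u y) + \<phi> u + \<phi> y)"
    using "3.IH"(2) \<phi> by blast+
  then have "even ((crossings C (y # xs) + \<phi> y + \<phi> v) + (of_bool (C u y) + \<phi> u + \<phi> y))"
    by (rule dvd_add)
  moreover have "crossings C (x # y # xs) + \<phi> u + \<phi> v + 2 * \<phi> y =
      (crossings C (y # xs) + \<phi> y + \<phi> v) + (of_bool (C u y) + \<phi> u + \<phi> y)"
    using \<open>x = u\<close> by simp
  ultimately show ?case by (metis dvd_add_times_triv_right_iff mult.commute)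
qed auto

lemma odd_crossings_imp_non_bridge:
  assumes "finite H" and "symp C"
    and walks: "\<forall>i<N. is_walk H (P i) (P (Suc i)) (\<pi> i)"
    and closed: "P N = P 0"
    and odd: "odd (\<Sum>i<N. crossings C (\<pi> i))"
  shows "\<exists>a b. {a, b} \<in> H \<and> C a b \<and> (adj (H - {{a, b}}))\<^sup>*\<^sup>* a b"
proof (rule ccontr)
  assume "\<not> ?thesis"
  then obtain \<phi> :: "'a \<Rightarrow> nat" where \<phi>: "\<forall>u v. {u, v} \<in> H \<longrightarrow> even (of_bool (C u v) + \<phi> u + \<phi> v)"
    using bridge_parity_potential[OF assms(1,2)] by blast
  have ev: "even (\<Sum>i<N. crossings C (\<pi> i) + \<phi> (P i) + \<phi> (P (Suc i)))"
    using walks walk_crossings_parity[OF \<phi>] by (intro dvd_sum) blast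
  have "(\<Sum>i<N. \<phi> (P (Suc i))) = (\<Sum>i<N. \<phi> (P i))"
    using sum.lessThan_Suc_shift[of "\<lambda>i. \<phi> (P i)" N] closed by simp
  then have eq: "(\<Sum>i<N. crossings C (\<pi> i) + \<phi> (P i) + \<phi> (P (Suc i))) =
      (\<Sum>i<N. crossings C (\<pi> i)) + 2 * (\<Sum>i<N. \<phi> (P i))"
    by (simp add: sum.distrib)
  from ev have "even ((\<Sum>i<N. crossings C (\<pi> i)) + 2 * (\<Sum>i<N. \<phi> (P i)))"
    unfolding eq .
  with odd show False by simp
qed

section \<open>Crossing a ray along a square loop\<close>

definition level_x :: "('a \<Rightarrow> real) \<Rightarrow> ('a \<Rightarrow> real) \<Rightarrow> real \<Rightarrow> 'a \<Rightarrow> 'a \<Rightarrow> real" where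
  "level_x X Y y0 u v = X u + (y0 - Y u) / (Y v - Y u) * (X v - X u)"

text \<open>The ray is \<open>{(x, y0) | x \<ge> x0}\<close> in the plane coordinates \<open>(X, Y)\<close>.\<close>

definition crosses_ray :: "('a \<Rightarrow> real) \<Rightarrow> ('a \<Rightarrow> real) \<Rightarrow> real \<Rightarrow> real \<Rightarrow> 'a \<Rightarrow> 'a \<Rightarrow> bool" where
  "crosses_ray X Y x0 y0 u v \<longleftrightarrow> (Y u < y0) \<noteq> (Y v < y0) \<and> x0 \<le> level_x X Y y0 u v"

lemma symp_crosses_ray: "symp (crosses_ray X Y x0 y0)"
proof (rule sympI)
  fix u v assume "crosses_ray X Y x0 y0 u v"
  moreover have "Y u \<noteq> Y v \<Longrightarrow> level_x X Y y0 u v = level_x X Y y0 v u"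
    unfolding level_x_def by (simp add: field_simps)
  ultimately show "crosses_ray X Y x0 y0 v u"
    unfolding crosses_ray_def by fastforce
qed

lemma level_x_between:
  assumes "(Y u < y0) \<noteq> (Y v < y0)"
  shows "min (X u) (X v) \<le> level_x X Y y0 u v \<and> level_x X Y y0 u v \<le> max (X u) (X v)"
proof -
  define l where "l = (y0 - Y u) / (Y v - Y u)"
  have l: "0 \<le> l \<and> l \<le> 1"
  proof (cases "Y u < y0")
    case True
    with assms have "y0 \<le> Y v" by auto
    with True show ?thesis unfolding l_def by (auto simp: divide_simps)
  next
    case False
    with assms have "Y v < y0" by auto
    with False show ?thesis unfolding l_def by (auto simp: divide_simps)
  qed
  have "level_x X Y y0 u v = X u + l * (X v - X u)"
    unfolding level_x_def l_def by simp
  also have "\<dots> = (1 - l) * X u + l * X v"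
    by (simp add: algebra_simps)
  finally have eq: "level_x X Y y0 u v = (1 - l) * X u + l * X v" .
  have "(1 - l) * min (X u) (X v) + l * min (X u) (X v) \<le> (1 - l) * X u + l * X v"
    "(1 - l) * X u + l * X v \<le> (1 - l) * max (X u) (X v) + l * max (X u) (X v)"
    using l by (intro add_mono mult_left_mono; simp)+
  then show ?thesis unfolding eq by (simp add: algebra_simps)
qed

lemma crosses_ray_right_iff:
  "x0 \<le> X u \<Longrightarrow> x0 \<le> X v \<Longrightarrow> crosses_ray X Y x0 y0 u v \<longleftrightarrow> (Y u < y0) \<noteq> (Y v < y0)"
  unfolding crosses_ray_def using level_x_between[of Y u y0 v X] by force

lemma not_crosses_ray_left: "X u < x0 \<Longrightarrow> X v < x0 \<Longrightarrow> \<not> crosses_ray X Y x0 y0 u v"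
  unfolding crosses_ray_def using level_x_between[of Y u y0 v X] by force

lemma crossings_cong:
  "(\<forall>u\<in>set p. \<forall>v\<in>set p. C u v = C' u v) \<Longrightarrow> crossings C p = crossings C' p"
  by (induction C p rule: crossings.induct) auto

lemma crossings_side_changes:
  fixes S :: "'a \<Rightarrow> bool"
  shows "p \<noteq> [] \<Longrightarrow> even (crossings (\<lambda>u v. S u \<noteq> S v) p + of_bool (S (hd p) \<noteq> S (last p)))"
proof (induction "\<lambda>u v. S u \<noteq> S v" p rule: crossings.induct)
  case (1 x y xs)
  then show ?case by (cases "S x"; cases "S y"; cases "S (last (y # xs))") auto
qed auto

lemma crossings_in_half_plane:
  assumes "p \<noteq> []"
    and "(\<forall>v\<in>set p. X v < x0) \<or> (\<forall>v\<in>set p. x0 \<le> X v) \<or> (\<forall>v\<in>set p. Y v < y0) \<or> (\<forall>v\<in>set p. y0 < Y v)"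
  shows "even (crossings (crosses_ray X Y x0 y0) p + of_bool (crosses_ray X Y x0 y0 (hd p) (last p)))"
proof -
  let ?C = "crosses_ray X Y x0 y0"
  have ends: "hd p \<in> set p" "last p \<in> set p" using \<open>p \<noteq> []\<close> by auto
  show ?thesis
  proof (cases "\<forall>v\<in>set p. x0 \<le> X v")
    case True
    then have "\<forall>u\<in>set p. \<forall>v\<in>set p. ?C u v = ((Y u < y0) \<noteq> (Y v < y0))"
      by (simp add: crosses_ray_right_iff)
    then have "crossings ?C p = crossings (\<lambda>u v. (Y u < y0) \<noteq> (Y v < y0)) p"
      by (rule crossings_cong)
    moreover have "?C (hd p) (last p) = ((Y (hd p) < y0) \<noteq> (Y (last p) < y0))"
      using True ends by (simp add: crosses_ray_right_iff)
    ultimately show ?thesis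
      using crossings_side_changes[OF \<open>p \<noteq> []\<close>, of "\<lambda>v. Y v < y0"] by simp
  next
    case False
    with assms(2) consider "\<forall>v\<in>set p. X v < x0" | "\<forall>v\<in>set p. Y v < y0" | "\<forall>v\<in>set p. y0 < Y v"
      by blast
    then have "\<forall>u\<in>set p. \<forall>v\<in>set p. \<not> ?C u v"
      by cases (auto simp: not_crosses_ray_left, auto simp: crosses_ray_def)
    with ends show ?thesis by (simp add: crossings_eq_0)
  qed
qed

text \<open>\<open>(square_x s i, square_y s i)\<close> for \<open>i = 0, \<dots>, 4 s\<close> runs once counterclockwise around the
  boundary of \<open>[0, s]\<^sup>2\<close> in unit steps, starting and ending at the origin.\<close>

definition square_x :: "nat \<Rightarrow> nat \<Rightarrow> nat" where
  "square_x s i = (if i < s then i else if i < 2 * s then s else if i < 3 * s then 3 * s - i else 0)"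

definition square_y :: "nat \<Rightarrow> nat \<Rightarrow> nat" where
  "square_y s i =
    (if i < s then 0 else if i < 2 * s then i - s else if i < 3 * s then s else if i < 4 * s then 4 * s - i else 0)"

lemma square_step:
  assumes "i < 4 * s"
  shows "(square_x s (Suc i) = square_x s i \<and> (square_y s (Suc i) = square_y s i + 1 \<or> square_y s i = square_y s (Suc i) + 1)) \<or>
         (square_y s (Suc i) = square_y s i \<and> (square_x s (Suc i) = square_x s i + 1 \<or> square_x s i = square_x s (Suc i) + 1))"
  using assms unfolding square_x_def square_y_def by auto

lemma square_closed: "square_x s (4 * s) = square_x s 0" "square_y s (4 * s) = square_y s 0"
  unfolding square_x_def square_y_def by auto

lemma square_le: "square_x s i \<le> s" "square_y s i \<le> s"
  unfolding square_x_def square_y_def by auto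

lemma square_sides:
  "i < s \<Longrightarrow> square_y s i = 0"
  "s \<le> i \<Longrightarrow> i < 2 * s \<Longrightarrow> square_x s i = s"
  "2 * s \<le> i \<Longrightarrow> i < 3 * s \<Longrightarrow> square_y s i = s"
  "3 * s \<le> i \<Longrightarrow> i < 4 * s \<Longrightarrow> square_x s i = 0"
  unfolding square_x_def square_y_def by auto

text \<open>With \<open>s = 2 j + 1\<close>, the ray from \<open>(j, j + 1/2)\<close> to the right is crossed by exactly one step.\<close>

lemma square_crossing_step:
  assumes "s = 2 * j + 1" "j \<ge> 1" "i < 4 * s"
  shows "((square_y s i \<le> j) \<noteq> (square_y s (Suc i) \<le> j) \<and> j \<le> square_x s i) \<longleftrightarrow> i = s + j"
  using assms unfolding square_x_def square_y_def by auto

lemma square_loop_step_crosses_ray: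
  fixes X Y :: "'a \<Rightarrow> real"
  assumes s: "s = 2 * j + 1" and j: "j \<ge> 1"
    and XP: "\<And>i. X (P i) = a + real (square_x s i)" and YP: "\<And>i. Y (P i) = b + real (square_y s i)"
    and "i < 4 * s"
  shows "crosses_ray X Y (a + j) (b + j + 1/2) (P i) (P (Suc i)) \<longleftrightarrow> i = s + j"
proof (cases "square_y s i = square_y s (Suc i)")
  case False
  then have "X (P (Suc i)) = X (P i)" using square_step[OF \<open>i < 4 * s\<close>] XP by auto
  then show ?thesis
    using square_crossing_step[OF s j \<open>i < 4 * s\<close>] XP YP unfolding crosses_ray_def level_x_def by auto
next
  case True
  then show ?thesis
    using square_crossing_step[OF s j \<open>i < 4 * s\<close>] YP unfolding crosses_ray_def by auto
qed

lemma near_square_loop_in_half_plane: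
  fixes X Y :: "'a \<Rightarrow> real"
  assumes s: "s = 2 * j + 1" and "i < 4 * s"
    and XP: "\<And>i. X (P i) = a + real (square_x s i)" and YP: "\<And>i. Y (P i) = b + real (square_y s i)"
    and near: "\<forall>v\<in>V. \<bar>X v - X (P i)\<bar> < j \<and> \<bar>Y v - Y (P i)\<bar> < j"
  shows "(\<forall>v\<in>V. X v < a + j) \<or> (\<forall>v\<in>V. a + j \<le> X v) \<or>
         (\<forall>v\<in>V. Y v < b + j + 1/2) \<or> (\<forall>v\<in>V. b + j + 1/2 < Y v)"
proof -
  have nearX: "X (P i) - j < X v \<and> X v < X (P i) + j" and nearY: "Y (P i) - j < Y v \<and> Y v < Y (P i) + j"
    if "v \<in> V" for v
    using near that by (auto simp: abs_less_iff)
  consider "i < s" | "s \<le> i" "i < 2 * s" | "2 * s \<le> i" "i < 3 * s" | "3 * s \<le> i"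
    by linarith
  then show ?thesis
  proof cases
    case 1
    then have "Y (P i) = b" using YP square_sides(1) by simp
    then show ?thesis using nearY by force
  next
    case 2
    then have "X (P i) = a + s" using XP square_sides(2) by simp
    then show ?thesis using nearX s by force
  next
    case 3
    then have "Y (P i) = b + s" using YP square_sides(3) by simp
    then show ?thesis using nearY s by force
  next
    case 4
    then have "X (P i) = a" using XP square_sides(4) \<open>i < 4 * s\<close> by simp
    then show ?thesis using nearX by force
  qed
qed

text \<open>Each walk replacing a step of the loop stays in a half-plane that misses the ray or contains
  it, so it crosses the ray with the parity of the step; exactly one step crosses.\<close>

lemma square_loop_crossings_odd:
  fixes X Y :: "'a \<Rightarrow> real"
  assumes s: "s = 2 * j + 1" and j: "j \<ge> 1"
    and XP: "\<And>i. X (P i) = a + real (square_x s i)" and YP: "\<And>i. Y (P i) = b + real (square_y s i)"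
    and walks: "\<forall>i<4 * s. is_walk H (P i) (P (Suc i)) (\<pi> i)"
    and near: "\<forall>i<4 * s. \<forall>v\<in>set (\<pi> i). \<bar>X v - X (P i)\<bar> < j \<and> \<bar>Y v - Y (P i)\<bar> < j"
  shows "odd (\<Sum>i<4 * s. crossings (crosses_ray X Y (a + j) (b + j + 1/2)) (\<pi> i))"
proof -
  let ?C = "crosses_ray X Y (a + j) (b + j + 1/2)"
  have "(\<Sum>i<4 * s. of_bool (?C (P i) (P (Suc i))) :: nat) = (\<Sum>i<4 * s. of_bool (i = s + j))"
    using square_loop_step_crosses_ray[where X = X and Y = Y and P = P, OF s j XP YP]
    by (intro sum.cong) auto
  also have "\<dots> = 1" using s by (simp add: of_bool_def sum.delta')
  finally have odd_steps: "odd (\<Sum>i<4 * s. of_bool (?C (P i) (P (Suc i))) :: nat)" by simp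
  have "even (crossings ?C (\<pi> i) + of_bool (?C (P i) (P (Suc i))))" if i: "i < 4 * s" for i
  proof -
    have ends: "\<pi> i \<noteq> []" "hd (\<pi> i) = P i" "last (\<pi> i) = P (Suc i)"
      using walks i unfolding is_walk_def by auto
    moreover have "(\<forall>v\<in>set (\<pi> i). X v < a + j) \<or> (\<forall>v\<in>set (\<pi> i). a + j \<le> X v) \<or>
        (\<forall>v\<in>set (\<pi> i). Y v < b + j + 1/2) \<or> (\<forall>v\<in>set (\<pi> i). b + j + 1/2 < Y v)"
      using near i by (intro near_square_loop_in_half_plane[where X = X and Y = Y and P = P, OF s i XP YP]) blast
    ultimately show ?thesis
      using crossings_in_half_plane[of "\<pi> i" X "a + j" Y "b + j + 1/2"] by simp
  qed
  then have "even (\<Sum>i<4 * s. crossings ?C (\<pi> i) + of_bool (?C (P i) (P (Suc i))))"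
    by (intro dvd_sum) auto
  with odd_steps show ?thesis by (simp add: sum.distrib)
qed

section \<open>The grid\<close>

definition grid_point :: "('n::finite \<Rightarrow> nat) \<Rightarrow> real ^ 'n" where
  "grid_point f = (\<chi> i. real (f i))"

definition cube :: "nat \<Rightarrow> ('n::finite \<Rightarrow> nat) set" where
  "cube r = {f. \<forall>i. f i < r}"

lemma grid_point_nth [simp]: "grid_point f $ i = real (f i)"
  unfolding grid_point_def by simp

lemma inj_grid_point: "inj grid_point"
  by (rule injI) (simp add: vec_eq_iff fun_eq_iff)

lemma grid_eq_image_cube: "grid r = grid_point ` cube r"
proof
  show "grid r \<subseteq> grid_point ` cube r"
  proof
    fix x assume "x \<in> grid r"
    then have "\<forall>i. \<exists>n<r. x $ i = real n" unfolding grid_def by fastforce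
    then obtain f where f: "\<And>i. f i < r \<and> x $ i = real (f i)" by metis
    then have "x = grid_point f" by (simp add: vec_eq_iff)
    with f show "x \<in> grid_point ` cube r" unfolding cube_def by blast
  qed
qed (auto simp: grid_def cube_def)

lemma cube_eq_PiE: "cube r = PiE UNIV (\<lambda>_. {..<r})"
  by (auto simp: cube_def PiE_UNIV_domain)

lemma finite_cube: "finite (cube r)"
  by (simp add: cube_eq_PiE finite_PiE)

lemma card_cube: "card (cube r :: ('n::finite \<Rightarrow> nat) set) = r ^ CARD('n)"
  by (simp add: cube_eq_PiE card_PiE)

lemma finite_grid: "finite (grid r)"
  by (simp add: grid_eq_image_cube finite_cube)

lemma card_grid: "card (grid r :: (real ^ 'n::finite) set) = r ^ CARD('n)"
  by (simp add: grid_eq_image_cube card_image inj_on_subset[OF inj_grid_point] card_cube)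

lemma abs_nth_le_dist: "\<bar>x $ i - y $ i\<bar> \<le> dist x (y :: real ^ 'n::finite)"
  using dist_vec_nth_le[of x i y] by (simp add: dist_real_def)

lemma walk_vertex_nth_near:
  fixes u :: "real ^ 'n::finite"
  assumes "is_walk E u v p" "walk_length p < d" "x \<in> set p"
  shows "\<bar>x $ c - u $ c\<bar> < d"
  using abs_nth_le_dist[of x c u] dist_le_walk_length[OF assms(1,3)] assms(2) by (simp add: dist_commute)

lemma dist_grid_point_single:
  assumes "\<And>i. i \<noteq> c \<Longrightarrow> f i = g i"
  shows "dist (grid_point f) (grid_point g :: real ^ 'n::finite) = \<bar>real (f c) - real (g c)\<bar>"
proof -
  have "(\<Sum>i\<in>UNIV. (dist (grid_point f $ i) (grid_point g $ i))\<^sup>2) = (real (f c) - real (g c))\<^sup>2"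
    using assms by (simp add: dist_real_def if_distrib[of "\<lambda>x. x\<^sup>2"] cong: if_cong)
      (subst sum.remove[of UNIV c]; simp add: dist_real_def)
  then show ?thesis unfolding dist_vec_def L2_set_def by simp
qed

section \<open>The lower bound\<close>

definition block :: "nat \<Rightarrow> ('n::finite \<Rightarrow> nat) \<Rightarrow> (real ^ 'n) set" where
  "block L \<beta> = {x. \<forall>c. real (L * \<beta> c) \<le> x $ c \<and> x $ c < real (L * (\<beta> c + 1))}"

lemma block_fits_in_grid: "\<beta> \<in> cube (r div L) \<Longrightarrow> L * (\<beta> c + 1) \<le> r"
proof -
  assume "\<beta> \<in> cube (r div L)"
  then have "\<beta> c + 1 \<le> r div L" unfolding cube_def by (simp add: Suc_le_eq)
  then have "L * (\<beta> c + 1) \<le> L * (r div L)" by (rule mult_le_mono2)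
  also have "\<dots> \<le> r" by simp
  finally show ?thesis .
qed

lemma block_index:
  assumes "x \<in> block L \<beta>" "L > 0"
  shows "\<beta> c = nat \<lfloor>x $ c / L\<rfloor>"
proof -
  have "real (\<beta> c) \<le> x $ c / L" "x $ c / L < real (\<beta> c) + 1"
    using assms unfolding block_def by (auto simp: field_simps)
  then show ?thesis by linarith
qed

lemma disjoint_family_block: "L > 0 \<Longrightarrow> disjoint_family_on (block L) B"
  unfolding disjoint_family_on_def by (metis block_index disjoint_iff ext)

definition loop_point :: "'n \<Rightarrow> 'n \<Rightarrow> ('n::finite \<Rightarrow> nat) \<Rightarrow> nat \<Rightarrow> nat \<Rightarrow> real ^ 'n" where
  "loop_point i1 i2 base s t =
     grid_point (base(i1 := base i1 + square_x s t, i2 := base i2 + square_y s t))"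

lemma loop_point_nth:
  assumes "i1 \<noteq> i2"
  shows "loop_point i1 i2 base s t $ i1 = real (base i1) + real (square_x s t)"
    and "loop_point i1 i2 base s t $ i2 = real (base i2) + real (square_y s t)"
    and "c \<noteq> i1 \<Longrightarrow> c \<noteq> i2 \<Longrightarrow> loop_point i1 i2 base s t $ c = real (base c)"
  using assms unfolding loop_point_def by auto

lemma dist_loop_point_Suc:
  assumes "i1 \<noteq> i2" "t < 4 * s"
  shows "dist (loop_point i1 i2 base s t) (loop_point i1 i2 base s (Suc t)) = 1"
proof -
  consider "square_x s (Suc t) = square_x s t" "square_y s (Suc t) = square_y s t + 1 \<or> square_y s t = square_y s (Suc t) + 1"
    | "square_y s (Suc t) = square_y s t" "square_x s (Suc t) = square_x s t + 1 \<or> square_x s t = square_x s (Suc t) + 1"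
    using square_step[OF assms(2)] by blast
  then show ?thesis
  proof cases
    case 1
    then show ?thesis
      unfolding loop_point_def using assms(1) by (subst dist_grid_point_single[of i2]) auto
  next
    case 2
    then show ?thesis
      unfolding loop_point_def using assms(1) by (subst dist_grid_point_single[of i1]) auto
  qed
qed

lemma loop_point_bounds:
  assumes "i1 \<noteq> i2"
  shows "real (base c) \<le> loop_point i1 i2 base s t $ c \<and> loop_point i1 i2 base s t $ c \<le> real (base c + s)"
  using square_le[of s t] loop_point_nth[OF assms] by (cases "c = i1 \<or> c = i2") auto

lemma loop_point_in_grid:
  assumes "\<forall>c. base c + s < r"
  shows "loop_point i1 i2 base s t \<in> grid r"
proof -
  have "base c < r" "base c + square_x s t < r" "base c + square_y s t < r" for c
    using assms square_le[of s t] by (meson add_left_mono le_less_trans le_add1)+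
  with assms have "base(i1 := base i1 + square_x s t, i2 := base i2 + square_y s t) \<in> cube r"
    unfolding cube_def by simp
  then show ?thesis
    unfolding loop_point_def grid_eq_image_cube by (rule imageI)
qed

lemma loop_point_closed: "loop_point i1 i2 base s (4 * s) = loop_point i1 i2 base s 0"
  unfolding loop_point_def by (simp only: square_closed)

lemma walk_near_loop_in_block:
  assumes "i1 \<noteq> i2"
    and "is_walk E (loop_point i1 i2 (\<lambda>c. (4 * j + 2) * \<beta> c + j) (2 * j + 1) t) v p"
    and "walk_length p < j" and "x \<in> set p"
  shows "x \<in> block (4 * j + 2) \<beta>"
  unfolding block_def
proof (intro CollectI allI)
  fix c
  have "\<bar>x $ c - loop_point i1 i2 (\<lambda>c. (4 * j + 2) * \<beta> c + j) (2 * j + 1) t $ c\<bar> < j"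
    using assms(2-4) by (rule walk_vertex_nth_near)
  then show "real ((4 * j + 2) * \<beta> c) \<le> x $ c \<and> x $ c < real ((4 * j + 2) * (\<beta> c + 1))"
    using loop_point_bounds[OF assms(1), of "\<lambda>c. (4 * j + 2) * \<beta> c + j" c "2 * j + 1" t]
    by (simp add: abs_less_iff)
qed

text \<open>Inside a block of side \<open>4 j + 2\<close> sits a square loop of side \<open>2 j + 1\<close> at distance \<open>j\<close> from the
  block boundary. Replacing its unit steps by walks shorter than \<open>j\<close> yields a closed chain of walks
  inside the block that crosses a ray from the centre of the loop an odd number of times.\<close>

lemma block_has_non_bridge:
  fixes E :: "(real ^ 'n::finite) set set" and \<beta> :: "'n \<Rightarrow> nat"
  assumes "CARD('n) \<ge> 2" and "finite E" and "j \<ge> 1"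
    and short: "\<forall>u\<in>grid r. \<forall>v\<in>grid r. dist u v = 1 \<longrightarrow> (\<exists>p. is_walk E u v p \<and> walk_length p < j)"
    and in_grid: "\<forall>c. (4 * j + 2) * (\<beta> c + 1) \<le> r"
  shows "\<exists>e\<in>E. e \<subseteq> block (4 * j + 2) \<beta> \<and>
           (\<exists>a b. e = {a, b} \<and> (adj ({f \<in> E. f \<subseteq> block (4 * j + 2) \<beta>} - {e}))\<^sup>*\<^sup>* a b)"
proof -
  have "\<not> CARD('n) \<le> Suc 0" using \<open>CARD('n) \<ge> 2\<close> by simp
  then obtain i1 i2 :: 'n where "i1 \<noteq> i2" by (auto simp: card_le_Suc0_iff_eq)
  define L where "L = 4 * j + 2"
  define s where "s = 2 * j + 1"
  define P where "P = loop_point i1 i2 (\<lambda>c. L * \<beta> c + j) s"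
  define H where "H = {e \<in> E. e \<subseteq> block L \<beta>}"
  have "L * \<beta> c + j + s < r" for c
    using in_grid[rule_format, of c] unfolding L_def s_def by (simp add: algebra_simps)
  then have "P t \<in> grid r" for t
    unfolding P_def by (intro loop_point_in_grid) simp
  then have "\<exists>p. is_walk E (P t) (P (Suc t)) p \<and> walk_length p < j" if "t < 4 * s" for t
    using short dist_loop_point_Suc[OF \<open>i1 \<noteq> i2\<close> that] unfolding P_def by blast
  then obtain \<pi> where \<pi>: "\<And>t. t < 4 * s \<Longrightarrow> is_walk E (P t) (P (Suc t)) (\<pi> t) \<and> walk_length (\<pi> t) < j"
    by metis
  then have "set (\<pi> t) \<subseteq> block L \<beta>" if "t < 4 * s" for t
    using walk_near_loop_in_block[OF \<open>i1 \<noteq> i2\<close>] that unfolding P_def L_def s_def by blast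
  with \<pi> have walks: "\<forall>t<4 * s. is_walk H (P t) (P (Suc t)) (\<pi> t)"
    unfolding H_def by (blast intro: is_walk_restrict)
  let ?X = "\<lambda>v :: real ^ 'n. v $ i1" and ?Y = "\<lambda>v :: real ^ 'n. v $ i2"
  have "finite H" unfolding H_def using \<open>finite E\<close> by simp
  moreover have "P (4 * s) = P 0" unfolding P_def by (rule loop_point_closed)
  moreover have "odd (\<Sum>t<4 * s. crossings (crosses_ray ?X ?Y (real (L * \<beta> i1 + j) + j) (real (L * \<beta> i2 + j) + j + 1/2)) (\<pi> t))"
  proof (rule square_loop_crossings_odd[OF s_def \<open>j \<ge> 1\<close> _ _ walks])
    show "\<forall>t<4 * s. \<forall>v\<in>set (\<pi> t). \<bar>?X v - ?X (P t)\<bar> < j \<and> \<bar>?Y v - ?Y (P t)\<bar> < j"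
      using \<pi> by (blast intro: walk_vertex_nth_near)
  qed (simp_all add: P_def loop_point_nth[OF \<open>i1 \<noteq> i2\<close>])
  ultimately obtain a b where "{a, b} \<in> H" "(adj (H - {{a, b}}))\<^sup>*\<^sup>* a b"
    using odd_crossings_imp_non_bridge[OF _ symp_crosses_ray walks] by blast
  then show ?thesis unfolding H_def L_def by (intro bexI[of _ "{a, b}"]) auto
qed

lemma removable_edges_of_disjoint_parts:
  assumes "disjoint_family_on B I"
    and "\<forall>i\<in>I. \<exists>e\<in>E. e \<subseteq> B i \<and> (\<exists>a b. e = {a, b} \<and> (adj ({f \<in> E. f \<subseteq> B i} - {e}))\<^sup>*\<^sup>* a b)"
  shows "\<exists>F \<subseteq> E. card F = card I \<and> (\<forall>e\<in>F. \<exists>a b. e = {a, b} \<and> (adj (E - F))\<^sup>*\<^sup>* a b)"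
proof -
  obtain e where e: "\<And>i. i \<in> I \<Longrightarrow> e i \<in> E \<and> e i \<subseteq> B i \<and>
      (\<exists>a b. e i = {a, b} \<and> (adj ({f \<in> E. f \<subseteq> B i} - {e i}))\<^sup>*\<^sup>* a b)"
    using bchoice[OF assms(2)[unfolded Bex_def]] by blast
  have own_part: "i = i'" if "i \<in> I" "i' \<in> I" "e i' \<subseteq> B i" for i i'
  proof (rule ccontr)
    assume "i \<noteq> i'"
    with that \<open>disjoint_family_on B I\<close> have "B i \<inter> B i' = {}"
      unfolding disjoint_family_on_def by blast
    moreover from e[OF that(2)] obtain a where "a \<in> e i'" by blast
    ultimately show False using e[OF that(2)] that(3) by blast
  qed
  have "inj_on e I"
    by (rule inj_onI) (metis e own_part)
  have sub: "{f \<in> E. f \<subseteq> B i} - {e i} \<subseteq> E - e ` I" if "i \<in> I" for i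
  proof
    fix f assume f: "f \<in> {f \<in> E. f \<subseteq> B i} - {e i}"
    have "f \<notin> e ` I"
    proof
      assume "f \<in> e ` I"
      then obtain i' where "i' \<in> I" "f = e i'" by blast
      with own_part[OF that] f show False by auto
    qed
    with f show "f \<in> E - e ` I" by blast
  qed
  have "\<exists>a b. e i = {a, b} \<and> (adj (E - e ` I))\<^sup>*\<^sup>* a b" if i: "i \<in> I" for i
  proof -
    obtain a b where "e i = {a, b}" "(adj ({f \<in> E. f \<subseteq> B i} - {e i}))\<^sup>*\<^sup>* a b"
      using e[OF i] by blast
    with rtranclp_adj_mono[OF sub[OF i]] show ?thesis by blast
  qed
  moreover have "e ` I \<subseteq> E" using e by blast
  moreover have "card (e ` I) = card I" using \<open>inj_on e I\<close> by (rule card_image)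
  ultimately show ?thesis by blast
qed

lemma grid_dilation_less_imp_gt_1:
  assumes "r \<ge> 2" "dilation (grid r :: (real ^ 'n::finite) set) E < ereal T"
  shows "T > 1"
proof -
  define u v :: "real ^ 'n" where "u = grid_point (\<lambda>_. 0)" and "v = grid_point (\<lambda>_. 1)"
  have "u \<in> grid r" "v \<in> grid r"
    using \<open>r \<ge> 2\<close> unfolding u_def v_def by (auto simp: grid_eq_image_cube cube_def)
  moreover have "u \<noteq> v"
    unfolding u_def v_def using inj_grid_point by (metis injD zero_neq_one)
  ultimately obtain p where "is_walk E u v p" "walk_length p < T * dist u v"
    using walk_shorter_if_dilation_less[OF assms(2)] by blast
  moreover from \<open>is_walk E u v p\<close> have "dist u v \<le> walk_length p"
    by (rule dist_le_walk_length_ends)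
  ultimately have "dist u v < T * dist u v" by linarith
  with \<open>u \<noteq> v\<close> show ?thesis by (simp add: mult_less_cancel_right1)
qed

text \<open>If the dilation is below \<open>T\<close>, every block of side \<open>4 \<lceil>T\<rceil> + 2\<close> contains an edge whose removal
  keeps its endpoints connected inside the block. All these edges can be removed at once without
  disconnecting the grid, so there are at least as many extra edges as blocks.\<close>

lemma blocks_le_extra_edges:
  fixes E :: "(real ^ 'n::finite) set set"
  assumes "CARD('n) \<ge> 2" and "r \<ge> 2"
    and E: "E \<subseteq> graph_edges_on (grid r)" "card E = r ^ CARD('n) - 1 + k"
    and dil: "dilation (grid r) E < ereal T"
  shows "(r div (4 * nat \<lceil>T\<rceil> + 2)) ^ CARD('n) \<le> k"
proof -
  define j where "j = nat \<lceil>T\<rceil>"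
  define L where "L = 4 * j + 2"
  define Q where "Q = r div L"
  have "T > 1" using grid_dilation_less_imp_gt_1[OF \<open>r \<ge> 2\<close> dil] .
  then have "j \<ge> 1" "T \<le> j" unfolding j_def by linarith+
  have "1 < r ^ CARD('n)" using \<open>r \<ge> 2\<close> by (intro one_less_power) auto
  then have "finite E" using E(2) card.infinite by fastforce
  have short: "\<forall>u\<in>grid r. \<forall>v\<in>grid r. dist u v = 1 \<longrightarrow> (\<exists>p. is_walk E u v p \<and> walk_length p < j)"
    using unit_walk_shorter_if_dilation_less[OF dil] \<open>T \<le> j\<close> by fastforce
  have parts: "\<forall>\<beta>\<in>cube Q. \<exists>e\<in>E. e \<subseteq> block L \<beta> \<and>
      (\<exists>a b. e = {a, b} \<and> (adj ({f \<in> E. f \<subseteq> block L \<beta>} - {e}))\<^sup>*\<^sup>* a b)"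
  proof
    fix \<beta> :: "'n \<Rightarrow> nat" assume "\<beta> \<in> cube Q"
    then have "L * (\<beta> c + 1) \<le> r" for c
      unfolding Q_def by (rule block_fits_in_grid)
    then show "\<exists>e\<in>E. e \<subseteq> block L \<beta> \<and>
        (\<exists>a b. e = {a, b} \<and> (adj ({f \<in> E. f \<subseteq> block L \<beta>} - {e}))\<^sup>*\<^sup>* a b)"
      unfolding L_def by (intro block_has_non_bridge[OF \<open>CARD('n) \<ge> 2\<close> \<open>finite E\<close> \<open>j \<ge> 1\<close> short]) auto
  qed
  have "disjoint_family_on (block L) (cube Q)"
    by (rule disjoint_family_block) (simp add: L_def)
  from removable_edges_of_disjoint_parts[OF this parts]
  obtain F where F: "F \<subseteq> E" "card F = card (cube Q :: ('n \<Rightarrow> nat) set)"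
    "\<forall>e\<in>F. \<exists>a b. e = {a, b} \<and> (adj (E - F))\<^sup>*\<^sup>* a b"
    by blast
  define r0 :: "real ^ 'n" where "r0 = grid_point (\<lambda>_. 0)"
  have "r0 \<in> grid r" using \<open>r \<ge> 2\<close> unfolding r0_def by (auto simp: grid_eq_image_cube cube_def)
  moreover have "\<forall>v\<in>grid r. (adj E)\<^sup>*\<^sup>* v r0"
    using \<open>r0 \<in> grid r\<close> connected_if_dilation_less[OF dil] by blast
  ultimately have "card (grid r :: (real ^ 'n) set) + card F \<le> card E + 1"
    using card_le_card_edges_Diff[OF \<open>finite E\<close> F(1) _ _ F(3)] by blast
  then show ?thesis
    using F(2) E(2) \<open>1 < r ^ CARD('n)\<close> by (simp add: card_grid card_cube Q_def L_def j_def)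
qed

lemma root_le_block_count:
  fixes T :: real
  assumes "T \<ge> 1" "D > 0" "20 * T * root D (real (k + 1)) < real r"
  shows "k + 1 \<le> (r div (4 * nat \<lceil>T\<rceil> + 2)) ^ D"
proof -
  define \<mu> where "\<mu> = root D (real (k + 1))"
  define L where "L = 4 * nat \<lceil>T\<rceil> + 2"
  define Q where "Q = r div L"
  have "\<mu> \<ge> 1" unfolding \<mu>_def using \<open>D > 0\<close> by simp
  have "real L < 10 * T" unfolding L_def using \<open>T \<ge> 1\<close> by linarith
  then have "2 * \<mu> * real L < 20 * T * \<mu>" using \<open>\<mu> \<ge> 1\<close> by (simp add: algebra_simps)
  also have "\<dots> < real r" using assms(3) unfolding \<mu>_def .
  also have "\<dots> < real L * (real Q + 1)"
  proof -
    have "r mod L < L" unfolding L_def by simp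
    moreover have "r = L * Q + r mod L" unfolding Q_def by simp
    ultimately have "r < L * Q + L" by linarith
    then have "real r < real (L * Q + L)" by (simp only: of_nat_less_iff)
    then show ?thesis by (simp add: algebra_simps)
  qed
  finally have "2 * \<mu> < real Q + 1" unfolding L_def by (simp add: mult.commute)
  with \<open>\<mu> \<ge> 1\<close> have "\<mu> \<le> real Q" by linarith
  then have "\<mu> ^ D \<le> real Q ^ D" using \<open>\<mu> \<ge> 1\<close> by (intro power_mono) auto
  moreover have "\<mu> ^ D = real (k + 1)" unfolding \<mu>_def using \<open>D > 0\<close> by simp
  ultimately show ?thesis unfolding Q_def L_def by (metis of_nat_le_iff of_nat_power)
qed

lemma grid_min_dilation_lower_bound:
  assumes "CARD('n::finite) \<ge> 2" and "r \<ge> 2"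
  shows "ereal (real r / (20 * root CARD('n) (real (k + 1)))) \<le> min_dilation (grid r :: (real ^ 'n) set) k"
  unfolding min_dilation_def
proof (rule INF_greatest, clarify)
  fix E :: "(real ^ 'n) set set"
  assume E: "E \<subseteq> graph_edges_on (grid r)" "card E = card (grid r :: (real ^ 'n) set) - 1 + k"
  show "ereal (real r / (20 * root CARD('n) (real (k + 1)))) \<le> dilation (grid r) E"
  proof (rule ccontr)
    assume "\<not> ?thesis"
    then have "dilation (grid r) E < ereal (real r / (20 * root CARD('n) (real (k + 1))))"
      by simp
    then obtain T where T: "dilation (grid r) E < ereal T"
      "ereal T < ereal (real r / (20 * root CARD('n) (real (k + 1))))"
      by (metis ereal_dense2)
    have "(r div (4 * nat \<lceil>T\<rceil> + 2)) ^ CARD('n) \<le> k"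
      using blocks_le_extra_edges[OF assms E(1) _ T(1)] E(2) by (simp add: card_grid)
    moreover have "k + 1 \<le> (r div (4 * nat \<lceil>T\<rceil> + 2)) ^ CARD('n)"
    proof (rule root_le_block_count)
      show "T \<ge> 1" using grid_dilation_less_imp_gt_1[OF \<open>r \<ge> 2\<close> T(1)] by simp
      have "root CARD('n) (real (k + 1)) > 0" by simp
      with T(2) show "20 * T * root CARD('n) (real (k + 1)) < real r"
        by (simp add: field_simps)
    qed simp
    ultimately show False by simp
  qed
qed

section \<open>The upper bound\<close>

text \<open>Grid points all of whose coordinates are multiples of \<open>L\<close> are hubs; each hub is joined to the
  hubs at distance \<open>L\<close> along the axes. Every other point is joined to its parent, obtained by
  decreasing a coordinate that is not a multiple of \<open>L\<close>, so the non-hub points form trees hanging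
  off the hubs.\<close>

definition hubs :: "nat \<Rightarrow> nat \<Rightarrow> ('n::finite \<Rightarrow> nat) set" where
  "hubs r L = {h \<in> cube r. \<forall>c. L dvd h c}"

definition parent :: "nat \<Rightarrow> ('n::finite \<Rightarrow> nat) \<Rightarrow> 'n \<Rightarrow> nat" where
  "parent L f = (let c = SOME c. \<not> L dvd f c in f(c := f c - 1))"

definition tree_edges :: "nat \<Rightarrow> nat \<Rightarrow> (real ^ 'n::finite) set set" where
  "tree_edges r L = (\<lambda>f. {grid_point f, grid_point (parent L f)}) ` (cube r - hubs r L)"

definition hub_edges :: "nat \<Rightarrow> nat \<Rightarrow> (real ^ 'n::finite) set set" where
  "hub_edges r L = (\<lambda>(h, c). {grid_point h, grid_point (h(c := h c + L))}) `
     {(h, c). h \<in> hubs r L \<and> h c + L < r}"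

definition hub_graph :: "nat \<Rightarrow> nat \<Rightarrow> (real ^ 'n::finite) set set" where
  "hub_graph r L = tree_edges r L \<union> hub_edges r L"

definition hub_below :: "nat \<Rightarrow> ('n::finite \<Rightarrow> nat) \<Rightarrow> 'n \<Rightarrow> nat" where
  "hub_below L f = (\<lambda>c. L * (f c div L))"

lemma parent_eq:
  assumes "f \<notin> hubs r L" "f \<in> cube r"
  obtains c where "\<not> L dvd f c" "parent L f = f(c := f c - 1)"
proof -
  have "\<exists>c. \<not> L dvd f c" using assms unfolding hubs_def by auto
  then have "\<not> L dvd f (SOME c. \<not> L dvd f c)" by (rule someI_ex)
  then show ?thesis using that unfolding parent_def by (simp add: Let_def)
qed

lemma parent_in_cube:
  assumes "f \<in> cube r" "f \<notin> hubs r L"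
  shows "parent L f \<in> cube r"
proof -
  obtain c where "parent L f = f(c := f c - 1)"
    using parent_eq[OF assms(2,1)] by blast
  with assms(1) show ?thesis unfolding cube_def by (auto simp: less_imp_diff_less)
qed

lemma dist_parent:
  assumes "f \<in> cube r" "f \<notin> hubs r L"
  shows "dist (grid_point f) (grid_point (parent L f)) = 1"
proof -
  obtain c where c: "\<not> L dvd f c" "parent L f = f(c := f c - 1)"
    using parent_eq[OF assms(2,1)] by blast
  then have "f c \<noteq> 0" by (metis dvd_0_right)
  then show ?thesis using c(2) by (subst dist_grid_point_single[of c]) auto
qed

lemma hub_graph_subset_edges:
  assumes "L \<ge> 1"
  shows "hub_graph r L \<subseteq> graph_edges_on (grid r :: (real ^ 'n::finite) set)"
proof
  fix e :: "(real ^ 'n) set" assume "e \<in> hub_graph r L"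
  then obtain f g where "e = {grid_point f, grid_point g}" "f \<in> cube r" "g \<in> cube r" "f \<noteq> g"
  proof (cases rule: UnE[OF \<open>e \<in> hub_graph r L\<close>[unfolded hub_graph_def]])
    case 1
    then obtain f where "f \<in> cube r" "f \<notin> hubs r L" "e = {grid_point f, grid_point (parent L f)}"
      unfolding tree_edges_def by blast
    with that show ?thesis using dist_parent parent_in_cube by fastforce
  next
    case 2
    then obtain h c where "h \<in> hubs r L" "h c + L < r" "e = {grid_point h, grid_point (h(c := h c + L))}"
      unfolding hub_edges_def by blast
    with that \<open>L \<ge> 1\<close> show ?thesis by (force simp: hubs_def cube_def fun_eq_iff)
  qed
  then show "e \<in> graph_edges_on (grid r)"
    unfolding graph_edges_on_def grid_eq_image_cube using inj_grid_point by (auto dest: injD)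
qed

lemma hubs_subset_cube: "hubs r L \<subseteq> cube r"
  unfolding hubs_def by blast

lemma finite_hubs: "finite (hubs r L)"
  using finite_subset[OF hubs_subset_cube finite_cube] .

lemma zero_in_hubs: "r \<ge> 1 \<Longrightarrow> (\<lambda>_. 0) \<in> hubs r L"
  unfolding hubs_def cube_def by auto

lemma card_hubs_le:
  assumes "L \<ge> 1" "r \<le> L * Q"
  shows "card (hubs r L :: ('n::finite \<Rightarrow> nat) set) \<le> Q ^ CARD('n)"
proof -
  have "inj_on (\<lambda>h c. h c div L) (hubs r L :: ('n \<Rightarrow> nat) set)"
  proof (rule inj_onI)
    fix h h' :: "'n \<Rightarrow> nat"
    assume h: "h \<in> hubs r L" "h' \<in> hubs r L" and eq: "(\<lambda>c. h c div L) = (\<lambda>c. h' c div L)"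
    show "h = h'"
    proof
      fix c
      have "h c div L = h' c div L" using fun_cong[OF eq, of c] by simp
      moreover have "L dvd h c" "L dvd h' c" using h unfolding hubs_def by auto
      ultimately show "h c = h' c" by (metis dvd_div_mult_self)
    qed
  qed
  moreover have "(\<lambda>h c. h c div L) ` (hubs r L :: ('n \<Rightarrow> nat) set) \<subseteq> cube Q"
  proof
    fix x :: "'n \<Rightarrow> nat" assume "x \<in> (\<lambda>h c. h c div L) ` hubs r L"
    then obtain h where "h \<in> cube r" "x = (\<lambda>c. h c div L)" unfolding hubs_def by blast
    then have "h c < r" for c unfolding cube_def by simp
    then have "h c < L * Q" for c using assms(2) less_le_trans by blast
    then show "x \<in> cube Q"
      unfolding cube_def \<open>x = _\<close> using assms(1) by (simp add: div_less_iff_less_mult mult.commute)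
  qed
  ultimately have "card (hubs r L :: ('n \<Rightarrow> nat) set) \<le> card (cube Q :: ('n \<Rightarrow> nat) set)"
    by (rule card_inj_on_le[OF _ _ finite_cube])
  then show ?thesis by (simp add: card_cube)
qed

lemma card_tree_edges:
  "card (tree_edges r L :: (real ^ 'n::finite) set set) \<le> r ^ CARD('n) - card (hubs r L :: ('n \<Rightarrow> nat) set)"
proof -
  have "card (tree_edges r L :: (real ^ 'n) set set) \<le> card (cube r - hubs r L :: ('n \<Rightarrow> nat) set)"
    unfolding tree_edges_def by (rule card_image_le) (simp add: finite_cube)
  also have "\<dots> = r ^ CARD('n) - card (hubs r L :: ('n \<Rightarrow> nat) set)"
    by (simp add: card_Diff_subset finite_hubs card_cube hubs_subset_cube)
  finally show ?thesis .
qed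

text \<open>A hub edge is determined by its upper end, which is a hub other than the origin, and its
  direction.\<close>

lemma card_hub_edges:
  assumes "L \<ge> 1" "r \<ge> 1"
  shows "card (hub_edges r L :: (real ^ 'n::finite) set set) \<le> (card (hubs r L :: ('n \<Rightarrow> nat) set) - 1) * CARD('n)"
proof -
  define A where "A = {(h, c). h \<in> (hubs r L :: ('n \<Rightarrow> nat) set) \<and> h c + L < r}"
  define up where "up = (\<lambda>(h :: 'n \<Rightarrow> nat, c). (h(c := h c + L), c))"
  have "inj_on up A"
    unfolding up_def by (rule inj_onI) (auto simp: fun_eq_iff split: prod.splits if_splits)
  have "h(c := h c + L) \<noteq> (\<lambda>_. 0)" for h :: "'n \<Rightarrow> nat" and c
    using \<open>L \<ge> 1\<close> by (auto dest: fun_cong[of _ _ c])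
  moreover have "h(c := h c + L) \<in> hubs r L" if "(h, c) \<in> A" for h c
    using that unfolding A_def hubs_def cube_def by auto
  ultimately have "up ` A \<subseteq> ((hubs r L :: ('n \<Rightarrow> nat) set) - {\<lambda>_. 0}) \<times> (UNIV :: 'n set)"
    unfolding up_def by auto
  have "finite A"
    by (rule finite_subset[of _ "hubs r L \<times> UNIV"]) (auto simp: A_def finite_hubs)
  have "card (hub_edges r L :: (real ^ 'n) set set) \<le> card A"
    unfolding hub_edges_def A_def[symmetric] using \<open>finite A\<close> by (rule card_image_le)
  also have "\<dots> = card (up ` A)"
    using \<open>inj_on up A\<close> by (simp add: card_image)
  also have "\<dots> \<le> card (((hubs r L :: ('n \<Rightarrow> nat) set) - {\<lambda>_. 0}) \<times> (UNIV :: 'n set))"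
    using \<open>up ` A \<subseteq> _\<close> by (rule card_mono[rotated]) (simp add: finite_hubs)
  also have "\<dots> = (card (hubs r L :: ('n \<Rightarrow> nat) set) - 1) * CARD('n)"
  proof -
    have "(\<lambda>_. 0) \<in> (hubs r L :: ('n \<Rightarrow> nat) set)" by (rule zero_in_hubs[OF \<open>r \<ge> 1\<close>])
    then show ?thesis by (simp add: card_cartesian_product card_Diff_singleton finite_hubs)
  qed
  finally show ?thesis .
qed

lemma card_hub_graph:
  assumes "L \<ge> 1" "r \<ge> 1" "r \<le> L * Q"
  shows "card (hub_graph r L :: (real ^ 'n::finite) set set) \<le> r ^ CARD('n) - 1 + (CARD('n) - 1) * (Q ^ CARD('n) - 1)"
proof -
  define H where "H = card (hubs r L :: ('n \<Rightarrow> nat) set)"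
  have "H \<ge> 1" unfolding H_def using zero_in_hubs[OF \<open>r \<ge> 1\<close>] finite_hubs
    by (metis One_nat_def Suc_leI card_gt_0_iff empty_iff)
  have "H \<le> r ^ CARD('n)" unfolding H_def
    using card_mono[OF finite_cube hubs_subset_cube] by (simp add: card_cube)
  have "H \<le> Q ^ CARD('n)" unfolding H_def using card_hubs_le[OF \<open>L \<ge> 1\<close> \<open>r \<le> L * Q\<close>] .
  have "card (hub_graph r L :: (real ^ 'n) set set) \<le>
      card (tree_edges r L :: (real ^ 'n) set set) + card (hub_edges r L :: (real ^ 'n) set set)"
    unfolding hub_graph_def by (rule card_Un_le)
  also have "\<dots> \<le> (r ^ CARD('n) - H) + (H - 1) * CARD('n)"
    unfolding H_def using card_tree_edges card_hub_edges[OF assms(1,2)] by (rule add_mono)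
  also have "\<dots> = r ^ CARD('n) - 1 + (CARD('n) - 1) * (H - 1)"
  proof -
    obtain x where x: "H = Suc x" using \<open>H \<ge> 1\<close> by (metis Suc_le_D One_nat_def)
    have "CARD('n) > 0" by (simp add: finite_UNIV_card_ge_0)
    then obtain y where y: "CARD('n) = Suc y" by (rule gr0_implies_Suc[elim_format]) blast
    have "Suc x \<le> r ^ CARD('n)" using \<open>H \<le> r ^ CARD('n)\<close> x by simp
    then show ?thesis unfolding x y by (simp add: algebra_simps)
  qed
  also have "\<dots> \<le> r ^ CARD('n) - 1 + (CARD('n) - 1) * (Q ^ CARD('n) - 1)"
    using \<open>H \<le> Q ^ CARD('n)\<close> by (intro add_left_mono mult_le_mono2 diff_le_mono)
  finally show ?thesis .
qed

text \<open>With truncated subtraction one of the two summands vanishes, so each term is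
  \<open>\<bar>f c - g c\<bar>\<close>.\<close>

definition l1_dist :: "('n::finite \<Rightarrow> nat) \<Rightarrow> ('n \<Rightarrow> nat) \<Rightarrow> nat" where
  "l1_dist f g = (\<Sum>c\<in>UNIV. (f c - g c) + (g c - f c))"

lemma real_l1_dist: "real (l1_dist f g) = (\<Sum>c\<in>UNIV. \<bar>real (f c) - real (g c)\<bar>)"
  unfolding l1_dist_def of_nat_sum by (rule sum.cong) (auto simp: of_nat_diff)

lemma l1_dist_sym: "l1_dist f g = l1_dist g f"
  unfolding l1_dist_def by (simp add: add.commute)

lemma sum_UNIV_fun_upd:
  fixes \<phi> :: "'n::finite \<Rightarrow> 'a::comm_monoid_add"
  shows "(\<Sum>c\<in>UNIV. (\<phi>(c0 := y)) c) + \<phi> c0 = (\<Sum>c\<in>UNIV. \<phi> c) + y"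
proof -
  have "(\<Sum>c\<in>UNIV. (\<phi>(c0 := y)) c) = y + (\<Sum>c\<in>UNIV - {c0}. \<phi> c)"
    by (subst sum.remove[of UNIV c0]) (auto intro: sum.cong)
  moreover have "(\<Sum>c\<in>UNIV. \<phi> c) = \<phi> c0 + (\<Sum>c\<in>UNIV - {c0}. \<phi> c)"
    by (subst sum.remove[of UNIV c0]) auto
  ultimately show ?thesis by (simp add: ac_simps)
qed

lemma hub_below_in_hubs: "f \<in> cube r \<Longrightarrow> hub_below L f \<in> hubs r L"
  unfolding hub_below_def hubs_def cube_def by (auto intro: le_less_trans[OF times_div_less_eq_dividend])

lemma div_mod_diff1_not_dvd:
  fixes a L :: nat
  assumes "L > 0" "\<not> L dvd a"
  shows "(a - 1) div L = a div L" "(a - 1) mod L = a mod L - 1"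
proof -
  have "a mod L \<ge> 1" using assms(2) by (simp add: dvd_eq_mod_eq_0)
  then have eq: "a - 1 = L * (a div L) + (a mod L - 1)"
    using mult_div_mod_eq[of L a] by linarith
  have "a mod L - 1 < L"
    using mod_less_divisor[OF \<open>L > 0\<close>, of a] by linarith
  then show "(a - 1) div L = a div L" "(a - 1) mod L = a mod L - 1"
    unfolding eq by simp_all
qed

lemma parent_step:
  assumes "L \<ge> 1" "f \<in> cube r" "f \<notin> hubs r L"
  shows "hub_below L (parent L f) = hub_below L f"
    and "(\<Sum>c\<in>UNIV. parent L f c mod L) + 1 = (\<Sum>c\<in>UNIV. f c mod L)"
    and "walk_le (hub_graph r L) (grid_point f) (grid_point (parent L f)) 1"
proof -
  obtain c where c: "\<not> L dvd f c" and parent: "parent L f = f(c := f c - 1)"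
    using parent_eq assms(2,3) by blast
  note div_mod = div_mod_diff1_not_dvd[of L "f c"]
  show "hub_below L (parent L f) = hub_below L f"
    unfolding parent hub_below_def using div_mod c \<open>L \<ge> 1\<close> by (auto simp: fun_eq_iff)
  have mods: "(\<lambda>c'. parent L f c' mod L) = (\<lambda>c'. f c' mod L)(c := f c mod L - 1)"
    unfolding parent using div_mod c \<open>L \<ge> 1\<close> by (auto simp: fun_eq_iff)
  have "f c mod L \<ge> 1" using c by (simp add: dvd_eq_mod_eq_0)
  then show "(\<Sum>c\<in>UNIV. parent L f c mod L) + 1 = (\<Sum>c\<in>UNIV. f c mod L)"
    using sum_UNIV_fun_upd[of "\<lambda>c. f c mod L" c "f c mod L - 1"] unfolding mods[symmetric] by simp
  show "walk_le (hub_graph r L) (grid_point f) (grid_point (parent L f)) 1"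
    unfolding hub_graph_def tree_edges_def
    using assms(2,3) dist_parent[OF assms(2,3)] by (intro walk_le_edge) auto
qed

lemma walk_le_hub_below:
  assumes "L \<ge> 1"
  shows "f \<in> cube r \<Longrightarrow>
    walk_le (hub_graph r L) (grid_point f) (grid_point (hub_below L f)) (\<Sum>c\<in>UNIV. f c mod L)"
proof (induction "\<Sum>c\<in>UNIV. f c mod L" arbitrary: f rule: less_induct)
  case less
  show ?case
  proof (cases "f \<in> hubs r L")
    case True
    then have "hub_below L f = f" unfolding hub_below_def hubs_def by (auto simp: fun_eq_iff)
    then show ?thesis by (simp add: walk_le_refl sum_nonneg)
  next
    case False
    note step = parent_step[OF \<open>L \<ge> 1\<close> less.prems False]
    have "walk_le (hub_graph r L) (grid_point (parent L f)) (grid_point (hub_below L f))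
        (\<Sum>c\<in>UNIV. parent L f c mod L)"
      using less.hyps[OF _ parent_in_cube[OF less.prems False]] step(1,2) by simp
    with step(3) have "walk_le (hub_graph r L) (grid_point f) (grid_point (hub_below L f))
        (1 + real (\<Sum>c\<in>UNIV. parent L f c mod L))"
      by (rule walk_le_trans)
    moreover have "1 + real (\<Sum>c\<in>UNIV. parent L f c mod L) = real (\<Sum>c\<in>UNIV. f c mod L)"
      using arg_cong[OF step(2), of real] by simp
    ultimately show ?thesis by simp
  qed
qed

lemma hub_step:
  fixes h h' :: "'n::finite \<Rightarrow> nat"
  assumes h: "h \<in> hubs r L" "h' \<in> hubs r L" and "h c < h' c"
  shows "h(c := h c + L) \<in> hubs r L"
    and "walk_le (hub_graph r L) (grid_point h) (grid_point (h(c := h c + L))) L"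
    and "l1_dist (h(c := h c + L)) h' + L = l1_dist h h'"
proof -
  have "L dvd h' c - h c" using h unfolding hubs_def by (simp add: dvd_diff_nat)
  then have "h c + L \<le> h' c" using \<open>h c < h' c\<close> by (metis dvd_imp_le zero_less_diff le_diff_conv2 less_imp_le add.commute)
  moreover have "h' c < r" using h unfolding hubs_def cube_def by auto
  ultimately have "h c + L < r" by linarith
  then show "h(c := h c + L) \<in> hubs r L" using h unfolding hubs_def cube_def by auto
  have "{grid_point h, grid_point (h(c := h c + L))} \<in> hub_graph r L"
    unfolding hub_graph_def hub_edges_def using h(1) \<open>h c + L < r\<close> by blast
  moreover have "dist (grid_point h) (grid_point (h(c := h c + L)) :: real ^ 'n) = L"
    by (subst dist_grid_point_single[of c]) auto
  ultimately show "walk_le (hub_graph r L) (grid_point h) (grid_point (h(c := h c + L))) L"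
    by (simp add: walk_le_edge)
  define \<phi> where "\<phi> c' = h c' - h' c' + (h' c' - h c')" for c'
  have "(\<lambda>c'. (h(c := h c + L)) c' - h' c' + (h' c' - (h(c := h c + L)) c')) = \<phi>(c := h' c - h c - L)"
    using \<open>h c + L \<le> h' c\<close> unfolding \<phi>_def by (auto simp: fun_eq_iff)
  then have "l1_dist (h(c := h c + L)) h' = sum (\<phi>(c := h' c - h c - L)) UNIV"
    by (simp only: l1_dist_def)
  moreover have "l1_dist h h' = sum \<phi> UNIV" unfolding l1_dist_def \<phi>_def ..
  moreover have "\<phi> c = h' c - h c" unfolding \<phi>_def using \<open>h c < h' c\<close> by simp
  ultimately show "l1_dist (h(c := h c + L)) h' + L = l1_dist h h'"
    using sum_UNIV_fun_upd[of \<phi> c "h' c - h c - L"] \<open>h c + L \<le> h' c\<close> by linarith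
qed

lemma walk_le_between_hubs:
  assumes "L \<ge> 1"
  shows "h \<in> hubs r L \<Longrightarrow> h' \<in> hubs r L \<Longrightarrow>
    walk_le (hub_graph r L) (grid_point h) (grid_point h') (l1_dist h h')"
proof (induction "l1_dist h h'" arbitrary: h h' rule: less_induct)
  case less
  show ?case
  proof (cases "h = h'")
    case True
    then show ?thesis by (simp add: walk_le_refl)
  next
    case False
    then obtain c where "h c \<noteq> h' c" by auto
    then consider "h c < h' c" | "h' c < h c" by linarith
    then show ?thesis
    proof cases
      case 1
      note step = hub_step[OF less.prems 1]
      have "walk_le (hub_graph r L) (grid_point (h(c := h c + L))) (grid_point h') (l1_dist (h(c := h c + L)) h')"
        using less.hyps[OF _ step(1) less.prems(2)] step(3) \<open>L \<ge> 1\<close> by simp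
      with step(2) have "walk_le (hub_graph r L) (grid_point h) (grid_point h')
          (real L + real (l1_dist (h(c := h c + L)) h'))"
        by (rule walk_le_trans)
      moreover have "real L + real (l1_dist (h(c := h c + L)) h') = real (l1_dist h h')"
        using arg_cong[OF step(3), of real] by simp
      ultimately show ?thesis by simp
    next
      case 2
      note step = hub_step[OF less.prems(2,1) 2]
      have dec: "l1_dist h (h'(c := h' c + L)) + L = l1_dist h h'"
        using step(3) by (simp add: l1_dist_sym)
      have "walk_le (hub_graph r L) (grid_point h) (grid_point (h'(c := h' c + L))) (l1_dist h (h'(c := h' c + L)))"
        using less.hyps[OF _ less.prems(1) step(1)] dec \<open>L \<ge> 1\<close> by simp
      from this walk_le_sym[OF step(2)] have "walk_le (hub_graph r L) (grid_point h) (grid_point h')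
          (real (l1_dist h (h'(c := h' c + L))) + real L)"
        by (rule walk_le_trans)
      moreover have "real (l1_dist h (h'(c := h' c + L))) + real L = real (l1_dist h h')"
        using arg_cong[OF dec, of real] by simp
      ultimately show ?thesis by simp
    qed
  qed
qed

lemma abs_hub_below_diff_le:
  assumes "L \<ge> 1"
  shows "\<bar>real (hub_below L f c) - real (hub_below L g c)\<bar> \<le> \<bar>real (f c) - real (g c)\<bar> + real L"
proof -
  have "real (hub_below L h c) = real (h c) - real (h c mod L)" for h :: "'a \<Rightarrow> nat"
    unfolding hub_below_def using mult_div_mod_eq[of L "h c"] by (metis add_diff_cancel_right' of_nat_add)
  moreover have "real (h c mod L) < real L" for h :: "'a \<Rightarrow> nat"
    using \<open>L \<ge> 1\<close> by simp
  ultimately show ?thesis by (smt (verit) of_nat_0_le_iff)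
qed

lemma walk_le_hub_graph:
  assumes "L \<ge> 1" "f \<in> cube r" "g \<in> cube r"
  shows "walk_le (hub_graph r L) (grid_point f) (grid_point (g :: 'n::finite \<Rightarrow> nat))
           (3 * real CARD('n) * real L + (\<Sum>c\<in>UNIV. \<bar>real (f c) - real (g c)\<bar>))"
proof -
  have mods: "real (\<Sum>c\<in>UNIV. h c mod L) \<le> real CARD('n) * real L" for h :: "'n \<Rightarrow> nat"
  proof -
    have "(\<Sum>c\<in>UNIV. h c mod L) \<le> (\<Sum>c\<in>(UNIV :: 'n set). L)"
      using \<open>L \<ge> 1\<close> by (intro sum_mono) (simp add: less_imp_le)
    then have "(\<Sum>c\<in>UNIV. h c mod L) \<le> CARD('n) * L" by simp
    then have "real (\<Sum>c\<in>UNIV. h c mod L) \<le> real (CARD('n) * L)" by (simp only: of_nat_le_iff)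
    then show ?thesis by simp
  qed
  have "real (l1_dist (hub_below L f) (hub_below L g)) \<le>
      (\<Sum>c\<in>UNIV. \<bar>real (f c) - real (g c)\<bar> + real L)"
    unfolding real_l1_dist by (intro sum_mono abs_hub_below_diff_le \<open>L \<ge> 1\<close>)
  also have "\<dots> = (\<Sum>c\<in>UNIV. \<bar>real (f c) - real (g c)\<bar>) + real CARD('n) * real L"
    by (simp add: sum.distrib)
  finally have hubs: "walk_le (hub_graph r L) (grid_point (hub_below L f)) (grid_point (hub_below L g))
      ((\<Sum>c\<in>UNIV. \<bar>real (f c) - real (g c)\<bar>) + real CARD('n) * real L)"
    using walk_le_between_hubs[OF \<open>L \<ge> 1\<close> hub_below_in_hubs hub_below_in_hubs] assms(2,3)
    by (blast intro: walk_le_mono)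
  have "walk_le (hub_graph r L) (grid_point f) (grid_point (hub_below L f)) (real CARD('n) * real L)"
    using walk_le_hub_below[OF \<open>L \<ge> 1\<close> \<open>f \<in> cube r\<close>] mods by (rule walk_le_mono)
  moreover have "walk_le (hub_graph r L) (grid_point (hub_below L g)) (grid_point g) (real CARD('n) * real L)"
    using walk_le_hub_below[OF \<open>L \<ge> 1\<close> \<open>g \<in> cube r\<close>] mods by (blast intro: walk_le_mono walk_le_sym)
  ultimately have "walk_le (hub_graph r L) (grid_point f) (grid_point g) (real CARD('n) * real L +
      ((\<Sum>c\<in>UNIV. \<bar>real (f c) - real (g c)\<bar>) + real CARD('n) * real L) + real CARD('n) * real L)"
    using hubs by (blast intro: walk_le_trans)
  then show ?thesis by (rule walk_le_mono) (simp add: algebra_simps)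
qed

lemma dilation_hub_graph_le:
  assumes "L \<ge> 1"
  shows "dilation (grid r :: (real ^ 'n::finite) set) (hub_graph r L) \<le> ereal (4 * real CARD('n) * real L)"
  unfolding dilation_def
proof (rule SUP_least, clarify)
  fix u v :: "real ^ 'n" assume "u \<in> grid r" "v \<in> grid r" "u \<noteq> v"
  then obtain f g where fg: "u = grid_point f" "v = grid_point g" "f \<in> cube r" "g \<in> cube r"
    unfolding grid_eq_image_cube by blast
  have coord: "\<bar>real (f c) - real (g c)\<bar> \<le> dist u v" for c
    using abs_nth_le_dist[of u c v] unfolding fg by simp
  then have "(\<Sum>c\<in>UNIV. \<bar>real (f c) - real (g c)\<bar>) \<le> real CARD('n) * dist u v"
    using sum_bounded_above[of UNIV "\<lambda>c. \<bar>real (f c) - real (g c)\<bar>" "dist u v"] by simp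
  moreover obtain c where "f c \<noteq> g c" using \<open>u \<noteq> v\<close> fg by (metis ext)
  then have "dist u v \<ge> 1" using coord[of c] by linarith
  moreover have "real L * 1 \<le> real L * dist u v" "1 * dist u v \<le> real L * dist u v"
    using \<open>dist u v \<ge> 1\<close> \<open>L \<ge> 1\<close> by (intro mult_left_mono mult_right_mono; simp)+
  then have "3 * real L + dist u v \<le> 4 * real L * dist u v" by linarith
  then have "real CARD('n) * (3 * real L + dist u v) \<le> real CARD('n) * (4 * real L * dist u v)"
    by (rule mult_left_mono) simp
  ultimately have "3 * real CARD('n) * real L + (\<Sum>c\<in>UNIV. \<bar>real (f c) - real (g c)\<bar>) \<le>
      4 * real CARD('n) * real L * dist u v"
    by (simp add: algebra_simps)
  then have "walk_le (hub_graph r L) u v (4 * real CARD('n) * real L * dist u v)"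
    using walk_le_hub_graph[OF \<open>L \<ge> 1\<close> fg(3,4)] unfolding fg(1,2)[symmetric]
    by (blast intro: walk_le_mono)
  then have "graph_dist (hub_graph r L) u v \<le> ereal (4 * real CARD('n) * real L * dist u v)"
    by (rule graph_dist_le_if_walk_le)
  then show "graph_dist (hub_graph r L) u v / ereal (dist u v) \<le> ereal (4 * real CARD('n) * real L)"
    using \<open>dist u v \<ge> 1\<close> by (subst ereal_divide_le_pos) (auto simp: algebra_simps)
qed

lemma finite_graph_edges_on: "finite S \<Longrightarrow> finite (graph_edges_on S)"
  by (rule finite_subset[of _ "Pow S"]) (auto simp: graph_edges_on_def)

lemma card_graph_edges_on: "finite S \<Longrightarrow> card (graph_edges_on S) = card S choose 2"
proof -
  assume "finite S"
  have "graph_edges_on S = {e. e \<subseteq> S \<and> card e = 2}"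
    unfolding graph_edges_on_def by (auto simp: card_2_iff)
  then show ?thesis using n_subsets[OF \<open>finite S\<close>, of 2] by simp
qed

text \<open>Padding a sparse graph with arbitrary extra edges does not increase its dilation.\<close>

lemma min_dilation_le_dilation:
  assumes "finite S" "E0 \<subseteq> graph_edges_on S"
    and "card E0 \<le> card S - 1 + k" "card S - 1 + k \<le> card (graph_edges_on S)"
  shows "min_dilation S k \<le> dilation S E0"
proof -
  have fin: "finite (graph_edges_on S)" using \<open>finite S\<close> by (rule finite_graph_edges_on)
  then have "card S - 1 + k - card E0 \<le> card (graph_edges_on S - E0)"
    using assms(2,4) by (simp add: card_Diff_subset finite_subset)
  then obtain B where B: "B \<subseteq> graph_edges_on S - E0" "card B = card S - 1 + k - card E0"
    by (meson obtain_subset_with_card_n)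
  have "finite B" "finite E0" using B(1) assms(2) fin by (auto intro: finite_subset)
  then have "card (E0 \<union> B) = card S - 1 + k"
    using B assms(3) by (subst card_Un_disjoint) auto
  moreover have "E0 \<union> B \<subseteq> graph_edges_on S" using B(1) assms(2) by blast
  ultimately have "min_dilation S k \<le> dilation S (E0 \<union> B)"
    unfolding min_dilation_def by (intro INF_lower) simp
  also have "\<dots> \<le> dilation S E0" by (rule dilation_antimono) simp
  finally show ?thesis .
qed

lemma mult_power_le_if_le_root_div:
  assumes "D > 0" "real q \<le> root D (real m) / real D"
  shows "D * q ^ D \<le> m"
proof -
  have "real D * real q ^ D \<le> real D * (root D (real m) / D) ^ D"
    using assms(2) by (intro mult_left_mono power_mono) auto
  also have "\<dots> = real m * real D / real D ^ D"
    using \<open>D > 0\<close> by (simp add: power_divide)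
  also have "\<dots> \<le> real m"
  proof -
    have "real D ^ 1 \<le> real D ^ D" using \<open>D > 0\<close> by (intro power_increasing) auto
    then have "real m * real D \<le> real m * real D ^ D" by (intro mult_left_mono) auto
    then show ?thesis using \<open>D > 0\<close> by (simp add: pos_divide_le_eq)
  qed
  finally have "real (D * q ^ D) \<le> real m" by simp
  then show ?thesis by (simp only: of_nat_le_iff)
qed

text \<open>\<open>Q\<close> is the number of hubs per axis: the hub graph has \<open>(D - 1) (Q\<^sup>D - 1)\<close> more edges than a
  spanning tree, and its dilation is about \<open>D r / Q\<close>.\<close>

lemma hub_count_exists:
  assumes "D \<ge> 2" "r \<ge> 1" "k + 1 \<le> r ^ D"
  obtains Q where "1 \<le> Q" "Q \<le> r" "(D - 1) * (Q ^ D - 1) \<le> k"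
    "root D (real (k + 1)) < 2 * real D * real Q"
proof (cases "root D (real (k + 1)) < D")
  case True
  then show ?thesis by (intro that[of 1]) (use assms True in auto)
next
  case False
  define \<mu> where "\<mu> = root D (real (k + 1))"
  define Q where "Q = nat \<lfloor>\<mu> / D\<rfloor>"
  have "D > 0" "real D \<ge> 1" using assms(1) by auto
  have "\<mu> / D \<ge> 1" using False \<open>real D \<ge> 1\<close> unfolding \<mu>_def by simp
  then have "1 \<le> Q" "real Q \<le> \<mu> / D" "\<mu> / D < real Q + 1"
    unfolding Q_def by linarith+
  then have "\<mu> < real D * (real Q + 1)"
    using \<open>real D \<ge> 1\<close> by (simp add: field_simps)
  also have "\<dots> \<le> real D * (2 * real Q)"
    using \<open>1 \<le> Q\<close> by (intro mult_left_mono) auto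
  finally have \<mu>_less: "\<mu> < 2 * real D * real Q" by simp
  have "real (k + 1) \<le> real r ^ D" using assms(3) by (metis of_nat_le_iff of_nat_power)
  then have "\<mu> \<le> root D (real r ^ D)" unfolding \<mu>_def using \<open>D > 0\<close> by simp
  also have "\<dots> = real r" using \<open>D > 0\<close> by (simp add: real_root_power_cancel)
  finally have "\<mu> / D \<le> real r"
    using divide_left_mono[of 1 "real D" \<mu>] \<open>real D \<ge> 1\<close> \<open>\<mu> / D \<ge> 1\<close> by fastforce
  then have "Q \<le> r" using \<open>real Q \<le> \<mu> / D\<close> by simp
  have "D * Q ^ D \<le> k + 1"
    using \<open>D > 0\<close> \<open>real Q \<le> \<mu> / D\<close> unfolding \<mu>_def by (rule mult_power_le_if_le_root_div)
  have "(D - 1) * (Q ^ D - 1) \<le> (D - 1) * Q ^ D" by simp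
  also have "\<dots> = D * Q ^ D - Q ^ D" by (simp add: diff_mult_distrib)
  also have "\<dots> \<le> k"
    using \<open>D * Q ^ D \<le> k + 1\<close> one_le_power[OF \<open>1 \<le> Q\<close>, of D] by linarith
  finally have "(D - 1) * (Q ^ D - 1) \<le> k" .
  with \<open>1 \<le> Q\<close> \<open>Q \<le> r\<close> show ?thesis using \<mu>_less unfolding \<mu>_def by (rule that)
qed

lemma choose_two_ge: "n \<ge> 4 \<Longrightarrow> 2 * (n - 1) \<le> n choose 2"
proof -
  assume "n \<ge> 4"
  then have "4 * (n - 1) \<le> n * (n - 1)" by (intro mult_le_mono1)
  then show ?thesis unfolding choose_two by linarith
qed

lemma round_up_div_bounds:
  fixes Q r :: nat
  assumes "1 \<le> Q" "Q \<le> r"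
  shows "r \<le> (r + Q - 1) div Q * Q" "(r + Q - 1) div Q * Q \<le> 2 * r"
proof -
  have "(r + Q - 1) div Q * Q + (r + Q - 1) mod Q = r + Q - 1" by simp
  moreover have "(r + Q - 1) mod Q < Q" using \<open>1 \<le> Q\<close> by simp
  ultimately show "r \<le> (r + Q - 1) div Q * Q" "(r + Q - 1) div Q * Q \<le> 2 * r"
    using \<open>Q \<le> r\<close> by linarith+
qed

lemma min_dilation_grid_le_hub_graph:
  assumes "CARD('n::finite) \<ge> 2" "r \<ge> 2" "k < r ^ CARD('n)"
    and "L \<ge> 1" "r \<le> L * Q" "(CARD('n) - 1) * (Q ^ CARD('n) - 1) \<le> k"
  shows "min_dilation (grid r :: (real ^ 'n) set) k \<le> dilation (grid r) (hub_graph r L :: (real ^ 'n) set set)"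
proof (rule min_dilation_le_dilation)
  show "finite (grid r :: (real ^ 'n) set)" by (rule finite_grid)
  show "hub_graph r L \<subseteq> graph_edges_on (grid r :: (real ^ 'n) set)"
    using \<open>L \<ge> 1\<close> by (rule hub_graph_subset_edges)
  show "card (hub_graph r L :: (real ^ 'n) set set) \<le> card (grid r :: (real ^ 'n) set) - 1 + k"
    using card_hub_graph[OF \<open>L \<ge> 1\<close> _ \<open>r \<le> L * Q\<close>, where 'n = 'n] assms(2,6)
    by (simp add: card_grid)
  have "r ^ 2 \<le> r ^ CARD('n)" using assms(1,2) by (intro power_increasing) auto
  moreover have "2 ^ 2 \<le> r ^ 2" using \<open>r \<ge> 2\<close> by (rule power_mono) simp
  ultimately have "r ^ CARD('n) \<ge> 4" by simp
  then show "card (grid r :: (real ^ 'n) set) - 1 + k \<le> card (graph_edges_on (grid r :: (real ^ 'n) set))"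
    using choose_two_ge[of "r ^ CARD('n)"] assms(3)
    by (simp add: card_graph_edges_on finite_grid card_grid)
qed

lemma grid_min_dilation_upper_bound:
  assumes "CARD('n::finite) \<ge> 2" and "r \<ge> 2" and "k < r ^ CARD('n)"
  shows "min_dilation (grid r :: (real ^ 'n) set) k
           \<le> ereal (16 * real CARD('n) ^ 2 * real r / root CARD('n) (real (k + 1)))"
proof -
  let ?D = "CARD('n)" and ?\<mu> = "root CARD('n) (real (k + 1))"
  have "r \<ge> 1" "k + 1 \<le> r ^ ?D" using assms by auto
  then obtain Q where Q: "1 \<le> Q" "Q \<le> r" "(?D - 1) * (Q ^ ?D - 1) \<le> k" "?\<mu> < 2 * real ?D * real Q"
    by (rule hub_count_exists[OF assms(1)])
  define L where "L = (r + Q - 1) div Q"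
  have "r \<le> L * Q" "L * Q \<le> 2 * r"
    unfolding L_def using round_up_div_bounds[OF Q(1,2)] by auto
  then have "L \<ge> 1" using \<open>r \<ge> 2\<close> by (cases L) auto
  have "min_dilation (grid r :: (real ^ 'n) set) k \<le> dilation (grid r) (hub_graph r L :: (real ^ 'n) set set)"
    using min_dilation_grid_le_hub_graph[OF assms \<open>L \<ge> 1\<close> \<open>r \<le> L * Q\<close> Q(3)] .
  also have "\<dots> \<le> ereal (4 * real ?D * real L)"
    by (rule dilation_hub_graph_le[OF \<open>L \<ge> 1\<close>])
  also have "\<dots> \<le> ereal (16 * real ?D ^ 2 * real r / ?\<mu>)"
  proof -
    have "real L * ?\<mu> \<le> real L * (2 * real ?D * real Q)"
      using Q(4) by (intro mult_left_mono) auto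
    also have "\<dots> = 2 * real ?D * real (L * Q)" by simp
    also have "\<dots> \<le> 2 * real ?D * (2 * real r)"
    proof -
      have "real (L * Q) \<le> real (2 * r)" using \<open>L * Q \<le> 2 * r\<close> by (simp only: of_nat_le_iff)
      then show ?thesis by (intro mult_left_mono) simp_all
    qed
    finally have "4 * real ?D * (real L * ?\<mu>) \<le> 4 * real ?D * (4 * real ?D * real r)"
      by (intro mult_left_mono) auto
    moreover have "?\<mu> > 0" by simp
    ultimately show ?thesis by (simp add: pos_le_divide_eq power2_eq_square algebra_simps)
  qed
  finally show ?thesis .
qed

theorem corollary3:
  assumes "CARD('n::finite) \<ge> 2"
  shows "\<exists>c1 c2 :: real. c1 > 0 \<and> c2 > 0 \<and>
    (\<forall>r::nat. r \<ge> 2 \<longrightarrow> (\<forall>k::nat. k < r ^ CARD('n) \<longrightarrow>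
       ereal (c1 * real r / real (k + 1) powr (1 / real CARD('n)))
         \<le> min_dilation (grid r :: (real ^ 'n) set) k \<and>
       min_dilation (grid r :: (real ^ 'n) set) k
         \<le> ereal (c2 * real r / real (k + 1) powr (1 / real CARD('n)))))"
proof -
  have "ereal (1 / 20 * real r / real (k + 1) powr (1 / real CARD('n)))
          \<le> min_dilation (grid r :: (real ^ 'n) set) k \<and>
        min_dilation (grid r :: (real ^ 'n) set) k
          \<le> ereal (16 * real CARD('n) ^ 2 * real r / real (k + 1) powr (1 / real CARD('n)))"
    if "r \<ge> 2" "k < r ^ CARD('n)" for r k :: nat
  proof -
    have "real (k + 1) powr (1 / real CARD('n)) = root CARD('n) (real (k + 1))"
      by (simp add: root_powr_inverse)
    then show ?thesis
      using grid_min_dilation_lower_bound[OF assms that(1), of k]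
        grid_min_dilation_upper_bound[OF assms that] by simp
  qed
  then show ?thesis by (intro exI[of _ "1 / 20"] exI[of _ "16 * real CARD('n) ^ 2"]) simp
qed

end
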